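(* Let $\mathbf{k}$ be a field, $U$ a $3$-dimensional $\mathbf{k}$-vector space with basis $x,y,z$, $U_0$ the span of $y,z$, $R=\operatorname{Sym}_\bullet U$, and $n$ a positive integer. Let $\Phi_{2n-1}\in D_{2n-1}U^*$ and assume that the $\mathbf{k}$-linear map $p:\operatorname{Sym}_{n-1}U\to D_{n-1}U^*$, $p(\mu_{n-1})=\mu_{n-1}(x(\Phi_{2n-1}))$, is an isomorphism. Let $I=\{\mu\in R\mid \mu(x(\Phi_{2n-1}))=0\}$. Let $B_0=B_3=R$, $B_1=(R\otimes D_{n-1}U_0^* )\oplus(R\otimes\operatorname{Sym}_nU_0)$, $B_2=(R\otimes\operatorname{Sym}_{n-1}U_0)\oplus(R\otimes D_nU_0^* )$ (tensor products over $\mathbf{k}$), and define $R$-linear maps, for $\mu_{0,i}\in\operatorname{Sym}_iU_0$ and $\nu_{0,i}\in D_iU_0^*$, by $$b_1(\nu_{0,n-1})=xp^{-1}(\nu_{0,n-1}),\qquad b_1(\mu_{0,n})=\mu_{0,n}-xp^{-1}(\mu_{0,n}(\Phi_{2n-1})),$$ $b_2(\mu_{0,n-1},0)$ has $R\otimes D_{n-1}U_0^*$-component $$x\sum_{m_1}\Big(\big(p^{-1}[(z\mu_{0,n-1})(\Phi_{2n-1})]\big)[(ym_1)(\Phi_{2n-1})]-\big(p^{-1}[(y\mu_{0,n-1})(\Phi_{2n-1})]\big)[(zm_1)(\Phi_{2n-1})]\Big)\otimes m_1^*$$ and $R\otimes\operatorname{Sym}_nU_0$-component $$x\sum_{m_2}\Big(\big(p^{-1}[(z\mu_{0,n-1})(\Phi_{2n-1})]\big)(y(m_2^*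 ))-\big(p^{-1}[(y\mu_{0,n-1})(\Phi_{2n-1})]\big)(z(m_2^* ))\Big)\otimes m_2+y\otimes z\mu_{0,n-1}-z\otimes y\mu_{0,n-1};$$ $b_2(0,\nu_{0,n})$ has $R\otimes D_{n-1}U_0^*$-component $$x\sum_{m_1}\Big(-\big(p^{-1}[(zm_1)(\Phi_{2n-1})]\big)(y(\nu_{0,n}))+\big(p^{-1}[(ym_1)(\Phi_{2n-1})]\big)(z(\nu_{0,n}))\Big)\otimes m_1^*-y\otimes z(\nu_{0,n})+z\otimes y(\nu_{0,n})$$ and $R\otimes\operatorname{Sym}_nU_0$-component $$x\sum_{m_2}\Big([p^{-1}(z(\nu_{0,n}))][y(m_2^* )]-[p^{-1}(y(\nu_{0,n}))][z(m_2^* )]\Big)\otimes m_2;$$ and $$b_3(1)=\Big(\sum_{m_1}b_1(m_1^* )\otimes m_1,\ \sum_{m_2}b_1(m_2)\otimes m_2^*\Big),$$ where $m_1$ ranges over the monomials of degree $n-1$ in $y,z$ and $m_2$ over the monomials of degree $n$ in $y,z$. Then $0\to B_3\xrightarrow{b_3}B_2\xrightarrow{b_2}B_1\xrightarrow{b_1}B_0$ is a minimal homogeneous resolution of $R/I$ by free $R$-modules, with graded form $0\to R(-2n-1)\to R(-n-1)^{2n+1}\to R(-n)^{2n+1}\to R$.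
   Context: $D_iV^*=\operatorname{Hom}_{\mathbf{k}}(\operatorname{Sym}_iV,\mathbf{k})$. $\operatorname{Sym}_\bullet U$ acts on $D_\bullet U^*=\bigoplus_iD_iU^*$: for $u\in\operatorname{Sym}_iU$, $w\in D_jU^*$, $u(w)\in D_{j-i}U^*$ is $v\mapsto w(vu)$ (zero if $i>j$); when $i=j$, $u(w)=w(u)\in\mathbf{k}$. For a monomial $m$ of degree $i$, $m^*$ denotes the dual basis element of $D_iU^*$ (with respect to the monomial basis). $D_iU_0^*$ is identified with the subspace of $D_iU^*$ spanned by the $m^*$ with $m$ a monomial in $y,z$ only; thus $p^{-1}$ may be applied to elements of $D_{n-1}U_0^*$. An expression $\mu(w)$ with $\mu\in\operatorname{Sym}_{n-1}U$ and $w\in D_{n-1}U^*$ is an element of $\mathbf{k}$. In $R\otimes\operatorname{Sym}_nU_0$ and $R\otimes D_{n-1}U_0^*$, $y\otimes(\cdot)$ and $z\otimes(\cdot)$ denote the linear forms $y,z\in R$ tensored with the indicated element. In the graded form, $B_1$ sits in degree $n$ and $B_2$ in degree $n+1$. *)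

theory Defs
  imports Main "HOL-Library.Poly_Mapping"
begin

text \<open>The three variables x, y, z of U; monomials are exponent vectors.
  R = Sym U = k[x,y,z] is the ring of finitely supported functions from
  monomials to k (with convolution product).\<close>

datatype var3 = VX | VY | VZ

type_synonym mono = "var3 \<Rightarrow>\<^sub>0 nat"
type_synonym 'k mpoly3 = "mono \<Rightarrow>\<^sub>0 'k"

text \<open>Elements of the divided power module D U^* (dual of Sym U, w.r.t. the
  monomial basis) are represented by their values on monomials.\<close>
type_synonym 'k dp = "mono \<Rightarrow> 'k"

definition mdeg :: "mono \<Rightarrow> nat" where
  "mdeg m = Poly_Mapping.lookup m VX + Poly_Mapping.lookup m VY + Poly_Mapping.lookup m VZ"

definition mon :: "mono \<Rightarrow> 'k::comm_ring_1 mpoly3" where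
  "mon m = Poly_Mapping.single m 1"

definition cst :: "'k::comm_ring_1 \<Rightarrow> 'k mpoly3" where
  "cst c = Poly_Mapping.single 0 c"

definition Xp :: "'k::comm_ring_1 mpoly3" where "Xp = mon (Poly_Mapping.single VX 1)"
definition Yp :: "'k::comm_ring_1 mpoly3" where "Yp = mon (Poly_Mapping.single VY 1)"
definition Zp :: "'k::comm_ring_1 mpoly3" where "Zp = mon (Poly_Mapping.single VZ 1)"

definition homog :: "nat \<Rightarrow> 'k::comm_ring_1 mpoly3 \<Rightarrow> bool" where
  "homog d f \<longleftrightarrow> (\<forall>m\<in>Poly_Mapping.keys f. mdeg m = d)"

definition Sym :: "nat \<Rightarrow> 'k::comm_ring_1 mpoly3 set" where
  "Sym d = {f. homog d f}"

text \<open>D_j U^*: functionals on Sym_j U, i.e. functions vanishing off degree j.\<close>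
definition Dsp :: "nat \<Rightarrow> 'k::comm_ring_1 dp set" where
  "Dsp j = {w. \<forall>m. mdeg m \<noteq> j \<longrightarrow> w m = 0}"

text \<open>Contraction action of R on D U^*: for a monomial u, u(w) is v \<mapsto> w(v u),
  extended linearly.  For u of degree j and w in D_j U^*, (act u w) 0 = w(u).\<close>
definition act :: "'k::comm_ring_1 mpoly3 \<Rightarrow> 'k dp \<Rightarrow> 'k dp" where
  "act \<mu> w = (\<lambda>v. \<Sum>u\<in>Poly_Mapping.keys \<mu>. Poly_Mapping.lookup \<mu> u * w (u + v))"

definition pair :: "'k::comm_ring_1 mpoly3 \<Rightarrow> 'k dp \<Rightarrow> 'k" where
  "pair \<mu> w = act \<mu> w 0"

definition dual :: "mono \<Rightarrow> 'k::comm_ring_1 dp" where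
  "dual m = (\<lambda>m'. if m' = m then 1 else 0)"

definition M0 :: "nat \<Rightarrow> mono set" where
  "M0 d = {m. Poly_Mapping.lookup m VX = 0 \<and> mdeg m = d}"

definition pmap :: "'k::comm_ring_1 dp \<Rightarrow> 'k mpoly3 \<Rightarrow> 'k dp" where
  "pmap \<Phi> \<mu> = act \<mu> (act Xp \<Phi>)"

definition pinv :: "nat \<Rightarrow> 'k::comm_ring_1 dp \<Rightarrow> 'k dp \<Rightarrow> 'k mpoly3" where
  "pinv n \<Phi> = inv_into (Sym (n - 1)) (pmap \<Phi>)"

definition Iid :: "'k::comm_ring_1 dp \<Rightarrow> 'k mpoly3 set" where
  "Iid \<Phi> = {\<mu>. act \<mu> (act Xp \<Phi>) = (\<lambda>_. 0)}"

text \<open>Common index set of the free bases of B_1 and B_2 (both of type mono + mono).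
  For B_1 = (R \<otimes> D_{n-1}U_0^*) \<oplus> (R \<otimes> Sym_n U_0): Inl m1 stands for 1 \<otimes> m1^*,
  Inr m2 for 1 \<otimes> m2.  For B_2 = (R \<otimes> Sym_{n-1}U_0) \<oplus> (R \<otimes> D_n U_0^*):
  Inl m1 stands for 1 \<otimes> m1, Inr m2 for 1 \<otimes> m2^*.\<close>
type_synonym bidx = "mono + mono"

definition Bidx :: "nat \<Rightarrow> bidx set" where
  "Bidx n = Inl ` M0 (n - 1) \<union> Inr ` M0 n"

fun b1 :: "nat \<Rightarrow> 'k::comm_ring_1 dp \<Rightarrow> bidx \<Rightarrow> 'k mpoly3" where
  "b1 n \<Phi> (Inl m1) = Xp * pinv n \<Phi> (dual m1)"
| "b1 n \<Phi> (Inr m2) = mon m2 - Xp * pinv n \<Phi> (act (mon m2) \<Phi>)"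

text \<open>b_2 : B_2 \<rightarrow> B_1; b2 n \<Phi> i j is the coefficient at basis element i of B_1
  of the image of basis element j of B_2.\<close>
fun b2 :: "nat \<Rightarrow> 'k::comm_ring_1 dp \<Rightarrow> bidx \<Rightarrow> bidx \<Rightarrow> 'k mpoly3" where
  "b2 n \<Phi> (Inl m1) (Inl m) =
     Xp * cst (pair (pinv n \<Phi> (act (Zp * mon m) \<Phi>)) (act (Yp * mon m1) \<Phi>)
             - pair (pinv n \<Phi> (act (Yp * mon m) \<Phi>)) (act (Zp * mon m1) \<Phi>))"
| "b2 n \<Phi> (Inr m2) (Inl m) =
     Xp * cst (pair (pinv n \<Phi> (act (Zp * mon m) \<Phi>)) (act Yp (dual m2))
             - pair (pinv n \<Phi> (act (Yp * mon m) \<Phi>)) (act Zp (dual m2)))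
     + Yp * cst (Poly_Mapping.lookup (Zp * mon m) m2) - Zp * cst (Poly_Mapping.lookup (Yp * mon m) m2)"
| "b2 n \<Phi> (Inl m1) (Inr m) =
     Xp * cst (- pair (pinv n \<Phi> (act (Zp * mon m1) \<Phi>)) (act Yp (dual m))
             + pair (pinv n \<Phi> (act (Yp * mon m1) \<Phi>)) (act Zp (dual m)))
     - Yp * cst (act Zp (dual m) m1) + Zp * cst (act Yp (dual m) m1)"
| "b2 n \<Phi> (Inr m2) (Inr m) =
     Xp * cst (pair (pinv n \<Phi> (act Zp (dual m))) (act Yp (dual m2))
             - pair (pinv n \<Phi> (act Yp (dual m))) (act Zp (dual m2)))"

text \<open>b_3 : B_3 = R \<rightarrow> B_2; b3 n \<Phi> i is the coefficient of b_3(1) at basis element i: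
  b_3(1) = (\<Sum>m1. b_1(m1^*) \<otimes> m1, \<Sum>m2. b_1(m2) \<otimes> m2^*).\<close>
fun b3 :: "nat \<Rightarrow> 'k::comm_ring_1 dp \<Rightarrow> bidx \<Rightarrow> 'k mpoly3" where
  "b3 n \<Phi> (Inl m1) = b1 n \<Phi> (Inl m1)"
| "b3 n \<Phi> (Inr m2) = b1 n \<Phi> (Inr m2)"

text \<open>Free modules B_1, B_2 as coefficient functions supported on the index set,
  and the induced R-linear maps.\<close>
definition Fmod :: "nat \<Rightarrow> (bidx \<Rightarrow> 'k::comm_ring_1 mpoly3) set" where
  "Fmod n = {f. \<forall>i. i \<notin> Bidx n \<longrightarrow> f i = 0}"

definition beta1 :: "nat \<Rightarrow> 'k::comm_ring_1 dp \<Rightarrow> (bidx \<Rightarrow> 'k mpoly3) \<Rightarrow> 'k mpoly3" where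
  "beta1 n \<Phi> f = (\<Sum>j\<in>Bidx n. b1 n \<Phi> j * f j)"

definition beta2 :: "nat \<Rightarrow> 'k::comm_ring_1 dp \<Rightarrow> (bidx \<Rightarrow> 'k mpoly3) \<Rightarrow> (bidx \<Rightarrow> 'k mpoly3)" where
  "beta2 n \<Phi> f = (\<lambda>i. if i \<in> Bidx n then (\<Sum>j\<in>Bidx n. b2 n \<Phi> i j * f j) else 0)"

definition beta3 :: "nat \<Rightarrow> 'k::comm_ring_1 dp \<Rightarrow> 'k mpoly3 \<Rightarrow> (bidx \<Rightarrow> 'k mpoly3)" where
  "beta3 n \<Phi> r = (\<lambda>i. if i \<in> Bidx n then b3 n \<Phi> i * r else 0)"

end

theory Submission
  imports Defs
begin

text \<open>Write \<open>\<phi> = x(\<Phi>)\<close>, so that \<open>p(\<mu>) = \<mu>(\<phi>)\<close> and \<open>I\<close> is the annihilator of \<open>\<phi>\<close>.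
  Everything rests on a reconstruction formula: a form \<open>F\<close> of degree \<open>n\<close> with \<open>x(F(\<Phi>)) = 0\<close>
  equals \<open>\<Sum> b\<^sub>1(m\<^sub>1\<^sup>*) F(\<Phi>)(m\<^sub>1) + \<Sum> b\<^sub>1(m\<^sub>2) F\<^sub>m\<^sub>2\<close>.  Applied to the columns of
  \<open>b\<^sub>2\<close> it gives \<open>b\<^sub>1 b\<^sub>2 = 0\<close>; the symmetry \<open>p\<^sup>-\<^sup>1(w)(w') = p\<^sup>-\<^sup>1(w')(w)\<close> makes \<open>b\<^sub>2\<close>
  skew-symmetric, and since \<open>b\<^sub>3\<close> is the transpose of \<open>b\<^sub>1\<close> also \<open>b\<^sub>2 b\<^sub>3 = 0\<close>.

  That \<open>b\<^sub>1\<close> maps onto \<open>I\<close> is shown by induction on the degree: the \<open>b\<^sub>1(m\<^sub>2)\<close> remove the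
  \<open>x\<close>-free part of an element of \<open>I\<close>, and the \<open>b\<^sub>1(m\<^sub>1\<^sup>*)\<close> correct the remaining multiple of
  \<open>x\<close> so that its cofactor lies in \<open>I\<close> again.  Exactness at \<open>B\<^sub>1\<close> and \<open>B\<^sub>2\<close> is also proved
  degree by degree: modulo \<open>x\<close> the matrices reduce to the Hilbert--Burch matrix of
  \<open>(y,z)\<^sup>n\<close> and its transpose, whose syzygies over \<open>k[y,z]\<close> are explicit; subtracting a
  boundary leaves a cycle divisible by \<open>x\<close>, whose cofactor is a cycle of lower degree.
  Finally \<open>b\<^sub>3\<close> is injective because \<open>R\<close> is a domain and \<open>b\<^sub>1(m\<^sub>2) \<noteq> 0\<close>.\<close>

section \<open>Polynomials in \<open>x, y, z\<close>\<close>

fun var_rank :: "var3 \<Rightarrow> nat" where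
  "var_rank VX = 0" | "var_rank VY = 1" | "var_rank VZ = 2"

text \<open>Ordering the variables makes the monomials a linearly ordered monoid, which is
  what HOL-Library needs to make the polynomial ring \<open>'k mpoly3\<close> an integral domain.\<close>

instantiation var3 :: linorder
begin

definition less_eq_var3 :: "var3 \<Rightarrow> var3 \<Rightarrow> bool" where
  "less_eq_var3 a b \<longleftrightarrow> var_rank a \<le> var_rank b"

definition less_var3 :: "var3 \<Rightarrow> var3 \<Rightarrow> bool" where
  "less_var3 a b \<longleftrightarrow> var_rank a < var_rank b"

instance
proof
  show "a = b" if "a \<le> b" "b \<le> a" for a b :: var3
    using that by (cases a; cases b) (simp_all add: less_eq_var3_def)
qed (auto simp: less_eq_var3_def less_var3_def)

end

abbreviation lookup where "lookup \<equiv> Poly_Mapping.lookup"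

abbreviation keys where "keys \<equiv> Poly_Mapping.keys"

declare One_nat_def [simp del]

lemma all_var3: "(\<forall>v. P v) \<longleftrightarrow> P VX \<and> P VY \<and> P VZ"
  by (metis var3.exhaust)

lemma mono_eqI: "lookup a VX = lookup b VX \<Longrightarrow> lookup a VY = lookup b VY \<Longrightarrow> lookup a VZ = lookup b VZ \<Longrightarrow> a = (b::mono)"
  by (rule poly_mapping_eqI) (metis var3.exhaust)

lemma mdeg_add[simp]: "mdeg (a + b) = mdeg a + mdeg b"
  by (simp add: mdeg_def lookup_add)

lemma mdeg_zero[simp]: "mdeg 0 = 0"
  by (simp add: mdeg_def)

lemma mdeg_single[simp]: "mdeg (Poly_Mapping.single v k) = k"
  by (cases v) (simp_all add: mdeg_def lookup_single)

lemma ex_add_mono_iff: "(\<exists>q. k = m + q) \<longleftrightarrow> (\<forall>v. lookup m v \<le> lookup (k::mono) v)"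
proof
  assume "\<forall>v. lookup m v \<le> lookup k v"
  then have "k = m + (k - m)"
    by (intro poly_mapping_eqI) (simp add: lookup_add lookup_minus)
  then show "\<exists>q. k = m + q" by blast
qed (auto simp: lookup_add)

lemma lookup_mon_mult: "lookup (mon m * F) k = (\<Sum>q. lookup F q when k = m + q)"
  unfolding mon_def lookup_mult by (simp add: lookup_single when_mult)

lemma lookup_mon_mult_add[simp]: "lookup (mon m * F) (m + w) = lookup F w"
  unfolding lookup_mon_mult by simp

lemma lookup_mon_mult_not_dvd: "(\<And>q. k \<noteq> m + q) \<Longrightarrow> lookup (mon m * F) k = 0"
  unfolding lookup_mon_mult by (simp add: when_def)

lemma lookup_cst_mult[simp]: "lookup (cst c * F) k = c * lookup F k"
  unfolding cst_def lookup_mult by (simp add: lookup_single when_mult Sum_any_right_distrib mult_when)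

lemma keys_mon_mult: "keys (mon m * F) = (\<lambda>q. m + q) ` keys F"
proof (rule set_eqI)
  fix k
  show "k \<in> keys (mon m * F) \<longleftrightarrow> k \<in> (\<lambda>q. m + q) ` keys F"
  proof (cases "\<exists>q. k = m + q")
    case True
    then obtain q where "k = m + q" by blast
    then show ?thesis by (auto simp: in_keys_iff)
  next
    case False
    then show ?thesis by (auto simp: in_keys_iff lookup_mon_mult_not_dvd)
  qed
qed

lemma mon_add: "mon (a + b) = (mon a * mon b :: 'k::comm_ring_1 mpoly3)"
  by (simp add: mon_def mult_single)

lemma mon_zero[simp]: "mon 0 = (1 :: 'k::comm_ring_1 mpoly3)"
  by (simp add: mon_def)

lemma cst_diff: "cst (a - b) = (cst a - cst b :: 'k::comm_ring_1 mpoly3)"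
  by (simp add: cst_def single_diff)

lemma cst_uminus: "cst (- a) = (- cst a :: 'k::comm_ring_1 mpoly3)"
  by (simp add: cst_def single_uminus)

lemma cst_zero[simp]: "cst 0 = (0 :: 'k::comm_ring_1 mpoly3)"
  by (simp add: cst_def)

lemma cst_one[simp]: "cst 1 = (1 :: 'k::comm_ring_1 mpoly3)"
  by (simp add: cst_def)

lemma lookup_mon: "lookup (mon m :: 'k::comm_ring_1 mpoly3) k = (if k = m then 1 else 0)"
  by (simp add: mon_def lookup_single)

lemma keys_mon[simp]: "keys (mon m :: 'k::comm_ring_1 mpoly3) = {m}"
  by (simp add: mon_def)

lemma mpoly_expand: "F = (\<Sum>m\<in>keys F. cst (lookup F m) * mon m :: 'k::comm_ring_1 mpoly3)"
proof (rule poly_mapping_eqI)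
  fix k
  have "lookup (\<Sum>m\<in>keys F. cst (lookup F m) * mon m) k = (\<Sum>m\<in>keys F. lookup (cst (lookup F m) * mon m) k)"
    by (simp add: lookup_sum)
  also have "\<dots> = (\<Sum>m\<in>keys F. if k = m then lookup F m else 0)"
    by (intro sum.cong) (auto simp: lookup_mon)
  also have "\<dots> = lookup F k"
    by (simp add: sum.delta in_keys_iff)
  finally show "lookup F k = lookup (\<Sum>m\<in>keys F. cst (lookup F m) * mon m) k" by simp
qed

lemma act_superset:
  assumes "finite A" "keys \<mu> \<subseteq> A"
  shows "act \<mu> w v = (\<Sum>u\<in>A. lookup \<mu> u * w (u + v))"
  unfolding act_def using assms
  by (intro sum.mono_neutral_left) (auto simp: in_keys_iff)

lemma act_add: "act (\<mu> + \<nu>) w = (\<lambda>v. act \<mu> w v + act \<nu> w v)"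
proof
  fix v
  have f: "finite (keys \<mu> \<union> keys \<nu>)" by simp
  have "keys (\<mu> + \<nu>) \<subseteq> keys \<mu> \<union> keys \<nu>" by (rule keys_add)
  then have "act (\<mu> + \<nu>) w v = (\<Sum>u\<in>keys \<mu> \<union> keys \<nu>. lookup (\<mu> + \<nu>) u * w (u + v))"
    using act_superset[OF f] by blast
  also have "\<dots> = (\<Sum>u\<in>keys \<mu> \<union> keys \<nu>. lookup \<mu> u * w (u + v)) + (\<Sum>u\<in>keys \<mu> \<union> keys \<nu>. lookup \<nu> u * w (u + v))"
    by (simp add: lookup_add distrib_right sum.distrib)
  also have "\<dots> = act \<mu> w v + act \<nu> w v"
    using act_superset[OF f, of \<mu>] act_superset[OF f, of \<nu>] by simp
  finally show "act (\<mu> + \<nu>) w v = act \<mu> w v + act \<nu> w v" .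
qed

lemma act_uminus: "act (- \<mu>) w = (\<lambda>v. - act \<mu> w v)"
  unfolding act_def by (auto simp: sum_negf)

lemma act_diff: "act (\<mu> - \<nu>) w = (\<lambda>v. act \<mu> w v - act \<nu> w v)"
  using act_add[of \<mu> "- \<nu>" w] by (simp add: act_uminus)

lemma act_zero[simp]: "act 0 w = (\<lambda>_. 0)"
  unfolding act_def by simp

lemma act_cst_mult: "act (cst c * \<mu>) w = (\<lambda>v. c * act \<mu> w v)"
proof
  fix v
  have "keys (cst c * \<mu>) \<subseteq> keys \<mu>" by (auto simp: in_keys_iff)
  then show "act (cst c * \<mu>) w v = c * act \<mu> w v"
    using act_superset[of "keys \<mu>" "cst c * \<mu>"]
    by (simp add: act_def sum_distrib_left mult.assoc)
qed

lemma act_sum: "finite I \<Longrightarrow> act (\<Sum>i\<in>I. \<mu> i) w = (\<lambda>v. \<Sum>i\<in>I. act (\<mu> i) w v)"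
  by (induction I rule: finite_induct) (simp_all add: act_add)

lemma act_mon: "act (mon m) w = (\<lambda>v. w (m + v))"
  unfolding act_def by (simp add: lookup_mon)

lemma act_mon_mult: "act (mon m * \<mu>) w = (\<lambda>v. act \<mu> w (m + v))"
proof
  fix v
  have "act (mon m * \<mu>) w v = (\<Sum>u\<in>(\<lambda>q. m + q) ` keys \<mu>. lookup (mon m * \<mu>) u * w (u + v))"
    unfolding act_def keys_mon_mult ..
  also have "\<dots> = (\<Sum>q\<in>keys \<mu>. lookup \<mu> q * w (m + q + v))"
    by (subst sum.reindex) (auto simp: inj_on_def)
  also have "\<dots> = act \<mu> w (m + v)"
    unfolding act_def by (simp add: ac_simps)
  finally show "act (mon m * \<mu>) w v = act \<mu> w (m + v)" .
qed

lemma act_mult: "act (\<mu> * \<nu>) w = act \<mu> (act \<nu> w)"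
proof
  fix v
  have "\<mu> * \<nu> = (\<Sum>m\<in>keys \<mu>. cst (lookup \<mu> m) * (mon m * \<nu>))"
    by (subst mpoly_expand[of \<mu>]) (simp add: sum_distrib_right mult.assoc)
  then have "act (\<mu> * \<nu>) w v = (\<Sum>m\<in>keys \<mu>. lookup \<mu> m * act \<nu> w (m + v))"
    by (simp add: act_sum act_cst_mult act_mon_mult)
  also have "\<dots> = act \<mu> (act \<nu> w) v" by (simp add: act_def)
  finally show "act (\<mu> * \<nu>) w v = act \<mu> (act \<nu> w) v" .
qed

lemma act_one[simp]: "act 1 w = w"
  using act_mon[of 0 w] by simp

lemma act_comm: "act \<mu> (act \<nu> w) = act \<nu> (act \<mu> w)"
  by (metis act_mult mult.commute)

lemma act_fun_add: "act \<mu> (\<lambda>v. w1 v + w2 v) = (\<lambda>v. act \<mu> w1 v + act \<mu> w2 v)"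
  unfolding act_def by (auto simp: distrib_left sum.distrib)

lemma act_fun_zero[simp]: "act \<mu> (\<lambda>_. 0) = (\<lambda>_. 0)"
  unfolding act_def by simp

lemma act_fun_sum: "finite I \<Longrightarrow> act \<mu> (\<lambda>v. \<Sum>i\<in>I. w i v) = (\<lambda>v. \<Sum>i\<in>I. act \<mu> (w i) v)"
  by (induction I rule: finite_induct) (simp_all add: act_fun_add)

lemma act_eq_pair_mon: "act \<mu> w v = pair (mon v * \<mu>) w"
  by (simp add: pair_def act_mon_mult)

lemma pair_dual: "pair \<mu> (dual m) = lookup \<mu> m"
proof -
  have "pair \<mu> (dual m) = (\<Sum>u\<in>keys \<mu>. if u = m then lookup \<mu> u else 0)"
    unfolding pair_def act_def dual_def by (intro sum.cong) auto
  also have "\<dots> = lookup \<mu> m" by (simp add: sum.delta' in_keys_iff)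
  finally show ?thesis .
qed

lemma homog_zero[simp]: "homog d 0"
  by (simp add: homog_def)

lemma homog_add: "homog d F \<Longrightarrow> homog d G \<Longrightarrow> homog d (F + G)"
  unfolding homog_def
proof
  fix m assume "\<forall>m\<in>keys F. mdeg m = d" "\<forall>m\<in>keys G. mdeg m = d" "m \<in> keys (F + G)"
  moreover have "keys (F + G) \<subseteq> keys F \<union> keys G" by (rule keys_add)
  ultimately show "mdeg m = d" by auto
qed

lemma homog_uminus: "homog d F \<Longrightarrow> homog d (- F)"
  unfolding homog_def by (simp add: in_keys_iff)

lemma homog_diff: "homog d F \<Longrightarrow> homog d G \<Longrightarrow> homog d (F - G)"
proof -
  assume "homog d F" "homog d G"
  then have "homog d (F + - G)" by (intro homog_add homog_uminus)
  then show ?thesis by simp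
qed

lemma homog_mult: "homog a F \<Longrightarrow> homog b G \<Longrightarrow> homog (a + b) (F * G)"
  unfolding homog_def
proof
  fix m assume hF: "\<forall>m\<in>keys F. mdeg m = a" and hG: "\<forall>m\<in>keys G. mdeg m = b" and m: "m \<in> keys (F * G)"
  then obtain p q where "m = p + q" "p \<in> keys F" "q \<in> keys G" using keys_mult[of F G] by blast
  then show "mdeg m = a + b" using hF hG by simp
qed

lemma homog_mon: "homog (mdeg m) (mon m)"
  by (simp add: homog_def)

lemma homog_cst: "homog 0 (cst c)"
  by (simp add: homog_def cst_def)

lemma homog_cst_mult: "homog d F \<Longrightarrow> homog d (cst c * F)"
  using homog_mult[OF homog_cst, of d F c] by simp

lemma homog_sum: "finite I \<Longrightarrow> (\<And>i. i \<in> I \<Longrightarrow> homog d (F i)) \<Longrightarrow> homog d (\<Sum>i\<in>I. F i)"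
  by (induction I rule: finite_induct) (simp_all add: homog_add)

lemma homog_lookup: "homog d F \<Longrightarrow> mdeg m \<noteq> d \<Longrightarrow> lookup F m = 0"
  unfolding homog_def by (auto simp: in_keys_iff)

lemma lookup_0_homog: "homog d F \<Longrightarrow> 0 < d \<Longrightarrow> lookup F 0 = 0"
  by (rule homog_lookup) auto

lemma dual_Dsp: "dual m \<in> Dsp (mdeg m)"
  by (simp add: Dsp_def dual_def)

lemma act_Dsp:
  assumes "homog a \<mu>" "w \<in> Dsp b"
  shows "act \<mu> w \<in> Dsp (b - a)" and "a > b \<Longrightarrow> act \<mu> w = (\<lambda>_. 0)"
proof -
  have z: "act \<mu> w v = 0" if "a + mdeg v \<noteq> b" for v
    unfolding act_def
  proof (intro sum.neutral ballI)
    fix u assume "u \<in> keys \<mu>"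
    then have "mdeg u = a" using assms(1) by (simp add: homog_def)
    then have "mdeg (u + v) \<noteq> b" using that by simp
    then have "w (u + v) = 0" using assms(2) by (simp add: Dsp_def)
    then show "lookup \<mu> u * w (u + v) = 0" by simp
  qed
  show "act \<mu> w \<in> Dsp (b - a)"
    unfolding Dsp_def
  proof (safe)
    fix v assume "mdeg v \<noteq> b - a"
    show "act \<mu> w v = 0"
    proof (cases "a \<le> b")
      case True then show ?thesis using z \<open>mdeg v \<noteq> b - a\<close> by auto
    next
      case False then show ?thesis using z by auto
    qed
  qed
  show "a > b \<Longrightarrow> act \<mu> w = (\<lambda>_. 0)" using z by auto
qed

definition mfilter :: "(mono \<Rightarrow> bool) \<Rightarrow> 'k::comm_ring_1 mpoly3 \<Rightarrow> 'k mpoly3" where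
  "mfilter P F = (\<Sum>m\<in>{m\<in>keys F. P m}. cst (lookup F m) * mon m)"

lemma lookup_mfilter: "lookup (mfilter P F) k = (if P k then lookup F k else 0)"
proof -
  have "lookup (mfilter P F) k = (\<Sum>m\<in>{m\<in>keys F. P m}. lookup (cst (lookup F m) * mon m) k)"
    by (simp add: mfilter_def lookup_sum)
  also have "\<dots> = (\<Sum>m\<in>{m\<in>keys F. P m}. if k = m then lookup F m else 0)"
    by (intro sum.cong) (auto simp: lookup_mon)
  also have "\<dots> = (if P k then lookup F k else 0)"
    by (simp add: sum.delta in_keys_iff)
  finally show ?thesis .
qed

lemma mfilter_split: "F = mfilter P F + mfilter (\<lambda>m. \<not> P m) F"
  by (rule poly_mapping_eqI) (simp add: lookup_add lookup_mfilter)

lemma mfilter_add: "mfilter P (F + G) = mfilter P F + mfilter P G"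
  by (rule poly_mapping_eqI) (simp add: lookup_add lookup_mfilter)

lemma mfilter_diff: "mfilter P (F - G) = mfilter P F - mfilter P G"
  by (rule poly_mapping_eqI) (simp add: lookup_minus lookup_mfilter)

lemma mfilter_uminus: "mfilter P (- F) = - mfilter P F"
  by (rule poly_mapping_eqI) (simp add: lookup_mfilter)

lemma mfilter_zero[simp]: "mfilter P 0 = 0"
  by (rule poly_mapping_eqI) (simp add: lookup_mfilter)

lemma mfilter_cst_mult: "mfilter P (cst c * F) = cst c * mfilter P F"
  by (rule poly_mapping_eqI) (simp add: lookup_mfilter)

lemma mfilter_sum: "finite I \<Longrightarrow> mfilter P (\<Sum>i\<in>I. F i) = (\<Sum>i\<in>I. mfilter P (F i))"
  by (induction I rule: finite_induct) (simp_all add: mfilter_add)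

lemma keys_mfilter: "k \<in> keys (mfilter P F) \<Longrightarrow> P k \<and> k \<in> keys F"
  by (simp add: in_keys_iff lookup_mfilter split: if_splits)

lemma mfilter_mon_mult: "mfilter P (mon m * F) = mon m * mfilter (\<lambda>q. P (m + q)) F"
proof (rule poly_mapping_eqI)
  fix k
  show "lookup (mfilter P (mon m * F)) k = lookup (mon m * mfilter (\<lambda>q. P (m + q)) F) k"
  proof (cases "\<exists>q. k = m + q")
    case True
    then obtain q where "k = m + q" by blast
    then show ?thesis by (simp add: lookup_mfilter)
  next
    case False
    then show ?thesis by (simp add: lookup_mfilter lookup_mon_mult_not_dvd)
  qed
qed

lemma mfilter_cong: "(\<And>k. k \<in> keys F \<Longrightarrow> P k = Q k) \<Longrightarrow> mfilter P F = mfilter Q F"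
  by (rule poly_mapping_eqI) (auto simp: lookup_mfilter in_keys_iff)

lemma mfilter_id: "(\<And>k. k \<in> keys F \<Longrightarrow> P k) \<Longrightarrow> mfilter P F = F"
  by (rule poly_mapping_eqI) (auto simp: lookup_mfilter in_keys_iff)

lemma mfilter_null: "(\<And>k. k \<in> keys F \<Longrightarrow> \<not> P k) \<Longrightarrow> mfilter P F = 0"
  by (rule poly_mapping_eqI) (auto simp: lookup_mfilter in_keys_iff)

lemma mon_dvd_of_keys:
  assumes "\<And>k. k \<in> keys F \<Longrightarrow> \<exists>q. k = m + q"
  shows "F = mon m * (\<Sum>k\<in>keys F. cst (lookup F k) * mon (k - m) :: 'k::comm_ring_1 mpoly3)"
proof -
  have "mon m * (\<Sum>k\<in>keys F. cst (lookup F k) * mon (k - m)) = (\<Sum>k\<in>keys F. mon m * (cst (lookup F k) * mon (k - m)) :: 'k mpoly3)"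
    by (rule sum_distrib_left)
  also have "\<dots> = (\<Sum>k\<in>keys F. cst (lookup F k) * mon k)"
  proof (rule sum.cong[OF refl])
    fix k assume "k \<in> keys F"
    then obtain q where q: "k = m + q" using assms by blast
    have "mon m * (cst (lookup F k) * mon (k - m)) = cst (lookup F k) * (mon m * mon (k - m) :: 'k mpoly3)"
      by (rule mult.left_commute)
    also have "mon m * mon (k - m) = (mon (m + (k - m)) :: 'k mpoly3)"
      by (simp only: mon_add)
    also have "m + (k - m) = k" using q by simp
    finally show "mon m * (cst (lookup F k) * mon (k - m)) = (cst (lookup F k) * mon k :: 'k mpoly3)" .
  qed
  finally show ?thesis using mpoly_expand[of F] by simp
qed

lemma mon_dvd_of_keysE:
  assumes "\<And>k. k \<in> keys F \<Longrightarrow> \<exists>q. k = m + q"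
  obtains G where "F = mon m * (G :: 'k::comm_ring_1 mpoly3)"
  using mon_dvd_of_keys[OF assms] by blast

lemma keys_mon_multE: "k \<in> keys (mon m * F) \<Longrightarrow> \<exists>q. k = m + q \<and> q \<in> keys F"
  unfolding keys_mon_mult by blast

definition var_dvd :: "var3 \<Rightarrow> nat \<Rightarrow> 'k::comm_ring_1 mpoly3 \<Rightarrow> bool" where
  "var_dvd v j F \<longleftrightarrow> (\<forall>k\<in>keys F. j \<le> lookup k v)"

lemma single_le_iff: "(\<forall>v'. lookup (Poly_Mapping.single v j) v' \<le> lookup (k::mono) v') \<longleftrightarrow> j \<le> lookup k v"
  by (auto simp: lookup_single when_def)

lemma var_dvd_iff: "var_dvd v j F \<longleftrightarrow> (\<exists>G. F = mon (Poly_Mapping.single v j) * G)"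
proof
  assume a: "var_dvd v j F"
  have "\<exists>q. k = Poly_Mapping.single v j + q" if "k \<in> keys F" for k
  proof -
    have "j \<le> lookup k v" using a that by (simp add: var_dvd_def)
    then show ?thesis by (simp only: ex_add_mono_iff single_le_iff)
  qed
  then obtain G where "F = mon (Poly_Mapping.single v j) * G" by (rule mon_dvd_of_keysE)
  then show "\<exists>G. F = mon (Poly_Mapping.single v j) * G" by blast
next
  assume "\<exists>G. F = mon (Poly_Mapping.single v j) * G"
  then obtain G where G: "F = mon (Poly_Mapping.single v j) * G" by blast
  show "var_dvd v j F" unfolding var_dvd_def
  proof
    fix k assume "k \<in> keys F"
    then obtain q where "k = Poly_Mapping.single v j + q" using G keys_mon_multE by blast
    then show "j \<le> lookup k v" by (simp add: lookup_add)
  qed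
qed

lemma var_dvd_mon_mult: "lookup m v = 0 \<Longrightarrow> var_dvd v j (mon m * F) \<longleftrightarrow> var_dvd v j F"
  unfolding var_dvd_def keys_mon_mult by (simp add: lookup_add)

definition hcomp :: "nat \<Rightarrow> 'k::comm_ring_1 mpoly3 \<Rightarrow> 'k mpoly3" where
  "hcomp d F = mfilter (\<lambda>m. mdeg m = d) F"

lemma lookup_hcomp: "lookup (hcomp d F) k = (if mdeg k = d then lookup F k else 0)"
  by (simp add: hcomp_def lookup_mfilter)

lemma hcomp_add: "hcomp d (F + G) = hcomp d F + hcomp d G" by (simp add: hcomp_def mfilter_add)

lemma hcomp_diff: "hcomp d (F - G) = hcomp d F - hcomp d G" by (simp add: hcomp_def mfilter_diff)

lemma hcomp_zero[simp]: "hcomp d 0 = 0" by (simp add: hcomp_def)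

lemma hcomp_cst_mult: "hcomp d (cst c * F) = cst c * hcomp d F" by (simp add: hcomp_def mfilter_cst_mult)

lemma hcomp_sum: "finite I \<Longrightarrow> hcomp d (\<Sum>i\<in>I. F i) = (\<Sum>i\<in>I. hcomp d (F i))" by (simp add: hcomp_def mfilter_sum)

lemma homog_hcomp: "homog d (hcomp d F)"
  unfolding homog_def hcomp_def using keys_mfilter by blast

lemma hcomp_homog: "homog d F \<Longrightarrow> hcomp d F = F"
  unfolding hcomp_def homog_def by (rule mfilter_id) auto

lemma hcomp_mon_mult: "hcomp d (mon m * F) = (if mdeg m \<le> d then mon m * hcomp (d - mdeg m) F else 0)"
proof -
  have "hcomp d (mon m * F) = mon m * mfilter (\<lambda>q. mdeg (m + q) = d) F"
    by (simp add: hcomp_def mfilter_mon_mult)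
  also have "\<dots> = (if mdeg m \<le> d then mon m * hcomp (d - mdeg m) F else 0)"
  proof (cases "mdeg m \<le> d")
    case True
    then have "mfilter (\<lambda>q. mdeg (m + q) = d) F = hcomp (d - mdeg m) F"
      unfolding hcomp_def by (intro mfilter_cong) auto
    then show ?thesis using True by simp
  next
    case False
    then have "mfilter (\<lambda>q. mdeg (m + q) = d) F = 0"
      by (intro mfilter_null) auto
    then show ?thesis using False by simp
  qed
  finally show ?thesis .
qed

lemma hcomp_homog_mult:
  assumes "homog e c"
  shows "hcomp d (c * F) = (if e \<le> d then c * hcomp (d - e) F else 0)"
proof -
  have "c * F = (\<Sum>m\<in>keys c. cst (lookup c m) * (mon m * F))"
    by (subst mpoly_expand[of c]) (simp add: sum_distrib_right mult.assoc)
  then have "hcomp d (c * F) = (\<Sum>m\<in>keys c. cst (lookup c m) * hcomp d (mon m * F))"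
    by (simp add: hcomp_sum hcomp_cst_mult)
  also have "\<dots> = (\<Sum>m\<in>keys c. cst (lookup c m) * (if e \<le> d then mon m * hcomp (d - e) F else 0))"
    using assms by (intro sum.cong refl) (simp add: hcomp_mon_mult homog_def)
  also have "\<dots> = (if e \<le> d then c * hcomp (d - e) F else 0)"
  proof (cases "e \<le> d")
    case True
    then show ?thesis
      by (subst (3) mpoly_expand[of c]) (simp add: sum_distrib_right mult.assoc)
  qed simp
  finally show ?thesis .
qed

lemma hcomp_decomp:
  assumes "\<And>m. m \<in> keys F \<Longrightarrow> mdeg m \<le> N"
  shows "F = (\<Sum>d\<le>N. hcomp d F)"
proof (rule poly_mapping_eqI)
  fix k
  have "lookup (\<Sum>d\<le>N. hcomp d F) k = (\<Sum>d\<le>N. if mdeg k = d then lookup F k else 0)"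
    by (simp add: lookup_sum lookup_hcomp)
  also have "\<dots> = (if mdeg k \<le> N then lookup F k else 0)"
    by (simp add: sum.delta')
  also have "\<dots> = lookup F k"
    using assms by (auto simp: in_keys_iff)
  finally show "lookup F k = lookup (\<Sum>d\<le>N. hcomp d F) k" by simp
qed

lemma mdeg_keys_bounded: "\<exists>N. \<forall>m\<in>keys F. mdeg m \<le> N"
  by (rule exI[of _ "Max (mdeg ` keys F)"]) simp

definition xfree :: "'k::comm_ring_1 mpoly3 \<Rightarrow> 'k mpoly3" where
  "xfree F = mfilter (\<lambda>m. lookup m VX = 0) F"

lemma xfree_add: "xfree (F + G) = xfree F + xfree G" by (simp add: xfree_def mfilter_add)

lemma xfree_diff: "xfree (F - G) = xfree F - xfree G" by (simp add: xfree_def mfilter_diff)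

lemma xfree_uminus: "xfree (- F) = - xfree F" by (simp add: xfree_def mfilter_uminus)

lemma xfree_zero[simp]: "xfree 0 = 0" by (simp add: xfree_def)

lemma xfree_cst_mult: "xfree (cst c * F) = cst c * xfree F" by (simp add: xfree_def mfilter_cst_mult)

lemma xfree_sum: "finite I \<Longrightarrow> xfree (\<Sum>i\<in>I. F i) = (\<Sum>i\<in>I. xfree (F i))" by (simp add: xfree_def mfilter_sum)

lemma xfree_mon_mult: "xfree (mon m * F) = (if lookup m VX = 0 then mon m * xfree F else 0)"
proof -
  have "xfree (mon m * F) = mon m * mfilter (\<lambda>q. lookup (m + q) VX = 0) F"
    by (simp add: xfree_def mfilter_mon_mult)
  also have "\<dots> = (if lookup m VX = 0 then mon m * xfree F else 0)"
  proof (cases "lookup m VX = 0")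
    case True
    then have "mfilter (\<lambda>q. lookup (m + q) VX = 0) F = xfree F"
      unfolding xfree_def by (intro mfilter_cong) (auto simp: lookup_add)
    then show ?thesis using True by simp
  next
    case False
    then have "mfilter (\<lambda>q. lookup (m + q) VX = 0) F = 0"
      by (intro mfilter_null) (auto simp: lookup_add)
    then show ?thesis using False by simp
  qed
  finally show ?thesis .
qed

lemma xfree_idem: "xfree (xfree F) = xfree F"
  by (rule poly_mapping_eqI) (simp add: xfree_def lookup_mfilter)

abbreviation X1 :: mono where "X1 \<equiv> Poly_Mapping.single VX 1"

abbreviation Y1 :: mono where "Y1 \<equiv> Poly_Mapping.single VY 1"

abbreviation Z1 :: mono where "Z1 \<equiv> Poly_Mapping.single VZ 1"

lemma xfree_Xp_mult: "xfree (Xp * F) = 0"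
  by (simp add: Xp_def xfree_mon_mult lookup_single)

lemma xfree_Yp_mult: "xfree (Yp * F) = Yp * xfree F"
  by (simp add: Yp_def xfree_mon_mult lookup_single)

lemma xfree_Zp_mult: "xfree (Zp * F) = Zp * xfree F"
  by (simp add: Zp_def xfree_mon_mult lookup_single)

lemma xfree_decomp: "\<exists>G. F = xfree F + Xp * G"
proof -
  have s: "F = xfree F + mfilter (\<lambda>m. \<not> lookup m VX = 0) F"
    unfolding xfree_def by (rule mfilter_split)
  have "\<exists>q. k = X1 + q" if "k \<in> keys (mfilter (\<lambda>m. \<not> lookup m VX = 0) F)" for k
  proof -
    have "lookup k VX \<noteq> 0" using keys_mfilter[OF that] by blast
    then have "1 \<le> lookup k VX" by simp
    then show ?thesis by (simp only: ex_add_mono_iff single_le_iff)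
  qed
  then obtain G where "mfilter (\<lambda>m. \<not> lookup m VX = 0) F = mon X1 * G" by (rule mon_dvd_of_keysE)
  then have "F = xfree F + Xp * G" using s by (simp add: Xp_def)
  then show ?thesis by blast
qed

lemma xfree_eq_0_iff: "xfree F = 0 \<longleftrightarrow> (\<exists>G. F = Xp * G)"
proof
  assume "xfree F = 0"
  then show "\<exists>G. F = Xp * G" using xfree_decomp[of F] by simp
next
  assume "\<exists>G. F = Xp * G"
  then obtain G where "F = Xp * G" by blast
  then show "xfree F = 0" by (simp add: xfree_Xp_mult)
qed

lemma xfree_hcomp: "xfree (hcomp D F) = hcomp D (xfree F)"
  by (rule poly_mapping_eqI) (simp add: xfree_def hcomp_def lookup_mfilter)

lemma xfree_cst[simp]: "xfree (cst c) = cst c"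
  unfolding xfree_def by (rule mfilter_id) (simp add: cst_def split: if_splits)

lemma homog_xfree: "homog d F \<Longrightarrow> homog d (xfree F)"
  unfolding homog_def xfree_def using keys_mfilter by blast

lemma mon_neq_0: "(mon m :: 'k::field mpoly3) \<noteq> 0"
proof
  assume "(mon m :: 'k mpoly3) = 0"
  then have "lookup (mon m :: 'k mpoly3) m = 0" by simp
  then show False by (simp add: lookup_mon)
qed

lemma Xp_neq_0: "(Xp :: 'k::field mpoly3) \<noteq> 0" unfolding Xp_def by (rule mon_neq_0)

lemma Zp_neq_0: "(Zp :: 'k::field mpoly3) \<noteq> 0" unfolding Zp_def by (rule mon_neq_0)

definition ymon :: "nat \<Rightarrow> mono" where "ymon a = Poly_Mapping.single VY a"

definition zmon :: "nat \<Rightarrow> mono" where "zmon a = Poly_Mapping.single VZ a"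

definition yzmon :: "nat \<Rightarrow> nat \<Rightarrow> mono" where "yzmon d i = ymon (d - i) + zmon i"

lemma lookup_ymon[simp]: "lookup (ymon a) VX = 0" "lookup (ymon a) VY = a" "lookup (ymon a) VZ = 0"
  by (simp_all add: ymon_def lookup_single)

lemma lookup_zmon[simp]: "lookup (zmon a) VX = 0" "lookup (zmon a) VY = 0" "lookup (zmon a) VZ = a"
  by (simp_all add: zmon_def lookup_single)

lemma lookup_yzmon[simp]: "lookup (yzmon d i) VX = 0" "lookup (yzmon d i) VY = d - i" "lookup (yzmon d i) VZ = i"
  by (simp_all add: yzmon_def lookup_add)

lemma lookup_X1[simp]: "lookup X1 VX = 1" "lookup X1 VY = 0" "lookup X1 VZ = 0"
  by (simp_all add: lookup_single)

lemma mdeg_ymon[simp]: "mdeg (ymon a) = a" by (simp add: mdeg_def)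

lemma mdeg_zmon[simp]: "mdeg (zmon a) = a" by (simp add: mdeg_def)

lemma mdeg_yzmon: "i \<le> d \<Longrightarrow> mdeg (yzmon d i) = d" by (simp add: mdeg_def)

lemma ymon_add: "ymon (a + b) = ymon a + ymon b" by (simp add: ymon_def single_add)

lemma zmon_add: "zmon (a + b) = zmon a + zmon b" by (simp add: zmon_def single_add)

lemma ymon_zero[simp]: "ymon 0 = 0" by (simp add: ymon_def)

lemma zmon_zero[simp]: "zmon 0 = 0" by (simp add: zmon_def)

lemma Yp_eq_mon: "Yp = mon (ymon 1)" by (simp add: Yp_def ymon_def)

lemma Zp_eq_mon: "Zp = mon (zmon 1)" by (simp add: Zp_def zmon_def)

lemma Xp_eq_mon: "Xp = mon X1" by (simp add: Xp_def)

lemma homog_Xp: "homog 1 Xp" using homog_mon[of X1] by (simp add: Xp_eq_mon)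

lemma homog_Yp: "homog 1 Yp" using homog_mon[of "ymon 1"] by (simp add: Yp_eq_mon)

lemma homog_Zp: "homog 1 Zp" using homog_mon[of "zmon 1"] by (simp add: Zp_eq_mon)

lemma ymon1_add_yzmon: "i \<le> d \<Longrightarrow> ymon 1 + yzmon d i = yzmon (Suc d) i"
  by (rule mono_eqI) (simp_all add: lookup_add)

lemma zmon1_add_yzmon: "i \<le> d \<Longrightarrow> zmon 1 + yzmon d i = yzmon (Suc d) (Suc i)"
  by (rule mono_eqI) (simp_all add: lookup_add)

lemma Yp_mult_yzmon: "i \<le> d \<Longrightarrow> Yp * mon (yzmon d i) = mon (yzmon (Suc d) i)"
proof -
  assume "i \<le> d"
  have "Yp * mon (yzmon d i) = mon (ymon 1 + yzmon d i)" by (simp only: Yp_eq_mon mon_add)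
  also have "ymon 1 + yzmon d i = yzmon (Suc d) i" using \<open>i \<le> d\<close> by (rule ymon1_add_yzmon)
  finally show ?thesis .
qed

lemma Zp_mult_yzmon: "i \<le> d \<Longrightarrow> Zp * mon (yzmon d i) = mon (yzmon (Suc d) (Suc i))"
proof -
  assume "i \<le> d"
  have "Zp * mon (yzmon d i) = mon (zmon 1 + yzmon d i)" by (simp only: Zp_eq_mon mon_add)
  also have "zmon 1 + yzmon d i = yzmon (Suc d) (Suc i)" using \<open>i \<le> d\<close> by (rule zmon1_add_yzmon)
  finally show ?thesis .
qed

lemma yzmon_inj: "i \<le> d \<Longrightarrow> j \<le> d \<Longrightarrow> yzmon d i = yzmon d j \<Longrightarrow> i = j"
  by (metis lookup_yzmon(3))

lemma M0_eq_yzmon_image: "M0 d = yzmon d ` {..d}"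
proof (rule set_eqI)
  fix m
  show "m \<in> M0 d \<longleftrightarrow> m \<in> yzmon d ` {..d}"
  proof
    assume "m \<in> M0 d"
    then have a: "lookup m VX = 0" "mdeg m = d" by (auto simp: M0_def)
    then have "m = yzmon d (lookup m VZ)" by (intro mono_eqI) (auto simp: mdeg_def)
    moreover have "lookup m VZ \<le> d" using a by (simp add: mdeg_def)
    ultimately show "m \<in> yzmon d ` {..d}" by blast
  next
    assume "m \<in> yzmon d ` {..d}"
    then show "m \<in> M0 d" by (auto simp: M0_def mdeg_yzmon)
  qed
qed

lemma inj_on_yzmon: "inj_on (yzmon d) {..d}"
  by (meson atMost_iff inj_onI yzmon_inj)

lemma finite_M0[simp]: "finite (M0 d)" by (simp add: M0_eq_yzmon_image)

lemma card_M0: "card (M0 d) = Suc d"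
  by (simp add: M0_eq_yzmon_image card_image[OF inj_on_yzmon])

lemma sum_M0_yzmon: "(\<Sum>m\<in>M0 d. f m) = (\<Sum>i\<le>d. f (yzmon d i))"
  by (simp add: M0_eq_yzmon_image sum.reindex[OF inj_on_yzmon])

lemma yzmon_in_M0: "i \<le> d \<Longrightarrow> yzmon d i \<in> M0 d" by (auto simp: M0_eq_yzmon_image)

lemma mdeg_M0: "m \<in> M0 d \<Longrightarrow> mdeg m = d" by (simp add: M0_def)

lemma lookup_VX_M0: "m \<in> M0 d \<Longrightarrow> lookup m VX = 0" by (simp add: M0_def)

lemma yzmon_top: "yzmon d d = zmon d" by (simp add: yzmon_def)

lemma yzmon_0: "yzmon d 0 = ymon d" by (simp add: yzmon_def)

lemma act_mon_dual_add: "act (mon a) (dual (a + w)) = dual w"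
  by (rule ext) (simp add: act_mon dual_def)

lemma act_mon_dual_not_dvd: "(\<And>q. m \<noteq> a + q) \<Longrightarrow> act (mon a) (dual m) = (\<lambda>_. 0)"
  by (rule ext) (auto simp: act_mon dual_def)

lemma act_Yp_dual_yzmon: "i \<le> d \<Longrightarrow> act Yp (dual (yzmon (Suc d) i)) = dual (yzmon d i)"
proof -
  assume "i \<le> d"
  then have "yzmon (Suc d) i = ymon 1 + yzmon d i" by (simp only: ymon1_add_yzmon)
  then show ?thesis by (simp only: Yp_eq_mon act_mon_dual_add)
qed

lemma act_Zp_dual_yzmon: "i \<le> d \<Longrightarrow> act Zp (dual (yzmon (Suc d) (Suc i))) = dual (yzmon d i)"
proof -
  assume "i \<le> d"
  then have "yzmon (Suc d) (Suc i) = zmon 1 + yzmon d i" by (simp only: zmon1_add_yzmon)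
  then show ?thesis by (simp only: Zp_eq_mon act_mon_dual_add)
qed

lemma act_Yp_dual_zmon: "act Yp (dual (zmon d)) = (\<lambda>_. 0)"
  unfolding Yp_eq_mon by (rule act_mon_dual_not_dvd) (metis lookup_ymon(2) lookup_zmon(2) lookup_add add_is_0 one_neq_zero)

lemma act_Zp_dual_ymon: "act Zp (dual (ymon d)) = (\<lambda>_. 0)"
  unfolding Zp_eq_mon by (rule act_mon_dual_not_dvd) (metis lookup_ymon(3) lookup_zmon(3) lookup_add add_is_0 one_neq_zero)

lemma act_Xp_dual_xfree: "lookup m VX = 0 \<Longrightarrow> act Xp (dual m) = (\<lambda>_. 0)"
  unfolding Xp_eq_mon by (rule act_mon_dual_not_dvd) (metis lookup_X1(1) lookup_add add_is_0 one_neq_zero)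

lemma act_mult_rev: "act (A * B) w = act B (act A w)"
  by (metis act_mult mult.commute)

lemma ex_zmon_add_iff: "(\<exists>q. k = zmon j + q) \<longleftrightarrow> j \<le> lookup k VZ"
  unfolding zmon_def by (simp only: ex_add_mono_iff single_le_iff)

lemma ex_ymon_add_iff: "(\<exists>q. k = ymon j + q) \<longleftrightarrow> j \<le> lookup k VY"
  unfolding ymon_def by (simp only: ex_add_mono_iff single_le_iff)

lemma ex_X1_add_iff: "(\<exists>q. k = X1 + q) \<longleftrightarrow> 1 \<le> lookup k VX"
  by (simp only: ex_add_mono_iff single_le_iff)

lemma homog_mon_M0: "m \<in> M0 d \<Longrightarrow> homog d (mon m)"
  using homog_mon[of m] mdeg_M0 by fastforce

lemma dual_Dsp_M0: "m \<in> M0 d \<Longrightarrow> dual m \<in> Dsp d"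
  using dual_Dsp[of m] by (simp add: mdeg_M0)

lemma act_dual_Dsp_M0:
  assumes "m \<in> M0 n"
  shows "act Zp (dual m) \<in> Dsp (n - 1)" and "act Yp (dual m) \<in> Dsp (n - 1)"
  using act_Dsp(1)[OF homog_Zp dual_Dsp_M0[OF assms]] act_Dsp(1)[OF homog_Yp dual_Dsp_M0[OF assms]]
  by simp_all

lemma zmon1_add_M0: "m \<in> M0 d \<Longrightarrow> zmon 1 + m \<in> M0 (Suc d)"
  by (simp add: M0_def lookup_add)

lemma ymon1_add_M0: "m \<in> M0 d \<Longrightarrow> ymon 1 + m \<in> M0 (Suc d)"
  by (simp add: M0_def lookup_add)

lemma M0_yzmon_lookup: "m \<in> M0 d \<Longrightarrow> m = yzmon d (lookup m VZ) \<and> lookup m VZ \<le> d"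
  by (auto simp: M0_eq_yzmon_image)

lemma yz_degree_ge_decomp:
  fixes F :: "'k::comm_ring_1 mpoly3"
  assumes "\<forall>k\<in>keys F. n \<le> lookup k VY + lookup k VZ"
  shows "\<exists>s. F = (\<Sum>i\<le>n. mon (yzmon n i) * s i)"
proof -
  define Q where "Q i k = (min (lookup k VZ) n = i)" for i k
  have dec: "F = (\<Sum>i\<le>n. mfilter (Q i) F)"
  proof (rule poly_mapping_eqI)
    fix k
    have "lookup (\<Sum>i\<le>n. mfilter (Q i) F) k = (\<Sum>i\<le>n. if min (lookup k VZ) n = i then lookup F k else 0)"
      by (simp add: lookup_sum lookup_mfilter Q_def)
    also have "\<dots> = lookup F k" by (simp add: sum.delta)
    finally show "lookup F k = lookup (\<Sum>i\<le>n. mfilter (Q i) F) k" by simp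
  qed
  have "\<forall>i. \<exists>s. i \<le> n \<longrightarrow> mfilter (Q i) F = mon (yzmon n i) * s"
  proof (intro allI)
    fix i
    show "\<exists>s. i \<le> n \<longrightarrow> mfilter (Q i) F = mon (yzmon n i) * s"
    proof (cases "i \<le> n")
      case True
      have "\<exists>q. k = yzmon n i + q" if "k \<in> keys (mfilter (Q i) F)" for k
      proof -
        have k: "Q i k" "k \<in> keys F" using keys_mfilter[OF that] by auto
        have "n \<le> lookup k VY + lookup k VZ" using assms k(2) by blast
        then have "\<forall>v. lookup (yzmon n i) v \<le> lookup k v" using k(1) unfolding all_var3
          by (auto simp: Q_def min_def split: if_splits)
        with ex_add_mono_iff[of k "yzmon n i"] show ?thesis by (rule iffD2)
      qed
      then obtain s where "mfilter (Q i) F = mon (yzmon n i) * s" by (rule mon_dvd_of_keysE)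
      then show ?thesis by blast
    qed simp
  qed
  then obtain s where s: "\<forall>i. i \<le> n \<longrightarrow> mfilter (Q i) F = mon (yzmon n i) * s i" by (rule choice[THEN exE])
  have "(\<Sum>i\<le>n. mfilter (Q i) F) = (\<Sum>i\<le>n. mon (yzmon n i) * s i)"
    using s by (intro sum.cong refl) simp
  then have "F = (\<Sum>i\<le>n. mon (yzmon n i) * s i)" using dec by simp
  then show ?thesis by blast
qed

lemma lookup_sum_cst_mon:
  "finite A \<Longrightarrow> lookup (\<Sum>m\<in>A. cst (c m) * mon m :: 'k::comm_ring_1 mpoly3) k = (if k \<in> A then c k else 0)"
proof -
  assume A: "finite A"
  have "lookup (\<Sum>m\<in>A. cst (c m) * mon m :: 'k mpoly3) k = (\<Sum>m\<in>A. lookup (cst (c m) * mon m :: 'k mpoly3) k)"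
    by (simp add: lookup_sum)
  also have "\<dots> = (\<Sum>m\<in>A. if k = m then c m else 0)"
    by (intro sum.cong) (auto simp: lookup_mon)
  also have "\<dots> = (if k \<in> A then c k else 0)" using A by (simp add: sum.delta)
  finally show ?thesis .
qed

lemma sum_mult_lookup_mon:
  assumes "finite A" "k \<in> A"
  shows "(\<Sum>m\<in>A. f m * cst (lookup (mon k :: 'k::comm_ring_1 mpoly3) m)) = (f k :: 'k mpoly3)"
proof -
  have "(\<Sum>m\<in>A. f m * cst (lookup (mon k :: 'k mpoly3) m)) = (\<Sum>m\<in>A. if m = k then f m else 0)"
    by (intro sum.cong) (auto simp: lookup_mon)
  also have "\<dots> = f k" using assms by (simp add: sum.delta')
  finally show ?thesis .
qed

lemma pair_mult: "pair (a * c) w = pair a (act c w)"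
  by (simp add: pair_def act_mult)

lemma pair_diff: "pair (A - B) w = pair A w - pair B w"
  by (simp add: pair_def act_diff)

lemma act_Yp_Zp_comb: "act (Yp * a - Zp * b) \<Phi> m1 = pair a (act (Yp * mon m1) \<Phi>) - pair b (act (Zp * mon m1) \<Phi>)"
proof -
  have "mon m1 * (Yp * a - Zp * b) = a * (Yp * mon m1) - b * (Zp * mon m1)"
    by (simp add: algebra_simps)
  then show ?thesis by (simp add: act_eq_pair_mon pair_diff pair_mult)
qed

lemma pair_Yp_Zp_dual: "pair a (act Yp (dual m2)) - pair b (act Zp (dual m2)) = lookup (Yp * a - Zp * b) m2"
proof -
  have "pair a (act Yp (dual m2)) = lookup (a * Yp) m2" by (simp add: pair_mult[symmetric] pair_dual)
  moreover have "pair b (act Zp (dual m2)) = lookup (b * Zp) m2" by (simp add: pair_mult[symmetric] pair_dual)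
  ultimately show ?thesis by (simp add: lookup_minus mult.commute)
qed

lemma act_dual_eq_lookup: "act c (dual m2) m = lookup (mon m * c) m2"
  by (simp add: act_eq_pair_mon pair_dual)

lemma dual_expand:
  assumes "w \<in> Dsp e" "act Xp w = (\<lambda>_. 0)"
  shows "w = (\<lambda>v. \<Sum>m\<in>M0 e. w m * dual m v)"
proof
  fix v
  show "w v = (\<Sum>m\<in>M0 e. w m * dual m v)"
  proof (cases "v \<in> M0 e")
    case True
    have "(\<Sum>m\<in>M0 e. w m * dual m v) = (\<Sum>m\<in>M0 e. if m = v then w m else 0)"
      by (intro sum.cong) (auto simp: dual_def)
    then show ?thesis using True by (simp add: sum.delta')
  next
    case False
    have z: "(\<Sum>m\<in>M0 e. w m * dual m v) = 0"
      using False by (intro sum.neutral) (auto simp: dual_def)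
    have "w v = 0"
    proof (cases "lookup v VX = 0")
      case True
      then have "mdeg v \<noteq> e" using False by (simp add: M0_def)
      then show ?thesis using assms(1) by (simp add: Dsp_def)
    next
      case False
      then have "1 \<le> lookup v VX" by simp
      then obtain q where "v = X1 + q" by (simp only: ex_X1_add_iff[symmetric]) blast
      then have "w v = act Xp w q" by (simp add: Xp_eq_mon act_mon)
      then show ?thesis using assms(2) by simp
    qed
    then show ?thesis using z by simp
  qed
qed

lemma homog_eq_M0_sum_plus_Xp:
  assumes "homog d F" "0 < d"
  obtains G where "homog (d - 1) G" "F = (\<Sum>m\<in>M0 d. cst (lookup F m) * mon m) + Xp * G"
proof -
  have xfree_eq: "xfree F = (\<Sum>m\<in>M0 d. cst (lookup F m) * mon m)"
  proof (rule poly_mapping_eqI)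
    fix k
    show "lookup (xfree F) k = lookup (\<Sum>m\<in>M0 d. cst (lookup F m) * mon m) k"
      unfolding lookup_sum_cst_mon[OF finite_M0] using homog_lookup[OF assms(1), of k]
      by (auto simp: xfree_def lookup_mfilter M0_def)
  qed
  obtain G where G: "F = xfree F + Xp * G" using xfree_decomp by blast
  have "F = hcomp d F" using assms(1) by (simp add: hcomp_homog)
  also have "\<dots> = hcomp d (xfree F + Xp * G)" by (rule arg_cong[OF G])
  also have "\<dots> = xfree F + Xp * hcomp (d - 1) G"
    using assms by (simp add: hcomp_add hcomp_homog homog_xfree hcomp_homog_mult[OF homog_Xp])
  finally have "F = (\<Sum>m\<in>M0 d. cst (lookup F m) * mon m) + Xp * hcomp (d - 1) G"
    by (simp only: xfree_eq)
  then show thesis using that homog_hcomp by blast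
qed

section \<open>Syzygies over \<open>k[y, z]\<close>\<close>

definition hilbert_burch :: "nat \<Rightarrow> (nat \<Rightarrow> 'k::comm_ring_1 mpoly3) \<Rightarrow> nat \<Rightarrow> 'k mpoly3" where
  "hilbert_burch n g i = (if 0 < i then Yp * g (i - 1) else 0) - (if i < n then Zp * g i else 0)"

lemma mon_ymon_Suc: "mon (ymon (Suc n)) = Yp * (mon (yzmon n 0) :: 'k::comm_ring_1 mpoly3)"
proof -
  have "ymon (Suc n) = ymon 1 + ymon n" by (simp add: ymon_add[symmetric] plus_1_eq_Suc)
  then show ?thesis by (simp only: Yp_eq_mon mon_add yzmon_0)
qed

text \<open>Since \<open>y\<^sup>n\<^sup>+\<^sup>1\<close> and \<open>z\<close> are coprime, a relation among the monomials of degree \<open>n + 1\<close> in \<open>y, z\<close>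
  forces \<open>z\<close> to divide the first coefficient, and then reduces to a relation in degree \<open>n\<close>.\<close>

lemma yzmon_relation_step:
  fixes a :: "nat \<Rightarrow> 'k::field mpoly3"
  assumes "(\<Sum>i\<le>Suc n. mon (yzmon (Suc n) i) * a i) = 0"
  obtains c where "a 0 = Zp * c"
    and "(\<Sum>i\<le>n. mon (yzmon n i) * (a (Suc i) + (if i = 0 then Yp * c else 0))) = 0"
proof -
  define T where "T = (\<Sum>i\<le>n. mon (yzmon n i) * a (Suc i))"
  have "(\<Sum>i\<le>Suc n. mon (yzmon (Suc n) i) * a i)
      = mon (yzmon (Suc n) 0) * a 0 + (\<Sum>i\<le>n. mon (yzmon (Suc n) (Suc i)) * a (Suc i))"
    by (rule sum.atMost_Suc_shift)
  also have "(\<Sum>i\<le>n. mon (yzmon (Suc n) (Suc i)) * a (Suc i)) = Zp * T"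
    unfolding T_def sum_distrib_left
    by (intro sum.cong refl) (simp add: Zp_mult_yzmon[symmetric] mult.assoc)
  finally have rel: "mon (ymon (Suc n)) * a 0 + Zp * T = 0" using assms by (simp add: yzmon_0)
  then have "mon (ymon (Suc n)) * a 0 = Zp * (- T)" by (simp add: add_eq_0_iff)
  then have "var_dvd VZ 1 (mon (ymon (Suc n)) * a 0)" unfolding var_dvd_iff Zp_def by blast
  then have "var_dvd VZ 1 (a 0)" by (simp add: var_dvd_mon_mult)
  then obtain c where c: "a 0 = Zp * c" unfolding var_dvd_iff Zp_def by blast
  have "Zp * (mon (ymon (Suc n)) * c + T) = 0" using rel c by (simp add: algebra_simps)
  then have rel': "mon (ymon (Suc n)) * c + T = 0" using Zp_neq_0[where 'k='k] by simp
  have "(\<Sum>i\<le>n. mon (yzmon n i) * (a (Suc i) + (if i = 0 then Yp * c else 0)))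
      = T + mon (yzmon n 0) * (Yp * c)"
    by (simp add: T_def distrib_left sum.distrib if_distrib[of "(*) _"] sum.delta cong: if_cong)
  also have "\<dots> = 0" using rel' by (simp add: mon_ymon_Suc algebra_simps)
  finally show thesis using c that by blast
qed

lemma yzmon_syzygy:
  fixes a :: "nat \<Rightarrow> 'k::field mpoly3"
  assumes "(\<Sum>i\<le>n. mon (yzmon n i) * a i) = 0"
  shows "\<exists>g. \<forall>i\<le>n. a i = hilbert_burch n g i"
  using assms
proof (induction n arbitrary: a)
  case 0
  then have "a 0 = 0" by (simp add: yzmon_def)
  then show ?case by (auto simp: hilbert_burch_def)
next
  case (Suc n)
  obtain c where c: "a 0 = Zp * c"
    and rel: "(\<Sum>i\<le>n. mon (yzmon n i) * (a (Suc i) + (if i = 0 then Yp * c else 0))) = 0"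
    using yzmon_relation_step[OF Suc.prems] by blast
  obtain g where g: "\<forall>i\<le>n. a (Suc i) + (if i = 0 then Yp * c else 0) = hilbert_burch n g i"
    using Suc.IH[OF rel] by blast
  define g' where "g' i = (if i = 0 then - c else g (i - 1))" for i
  have "a i = hilbert_burch (Suc n) g' i" if "i \<le> Suc n" for i
  proof (cases i)
    case 0
    then show ?thesis using c by (simp add: hilbert_burch_def g'_def)
  next
    case (Suc k)
    then have "a (Suc k) = hilbert_burch n g k - (if k = 0 then Yp * c else 0)"
      using g that by (simp add: eq_diff_eq)
    then show ?thesis
    proof (cases k)
      case 0
      have "hilbert_burch (Suc n) g' (Suc 0) = hilbert_burch n g 0 - Yp * c"
        by (cases "0 < n") (simp_all add: hilbert_burch_def g'_def algebra_simps)
      then show ?thesis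
        using \<open>i = Suc k\<close> \<open>a (Suc k) = _\<close> 0 by simp
    qed (use Suc in \<open>simp add: hilbert_burch_def g'_def\<close>)
  qed
  then show ?case by blast
qed

lemma act_Yp_contraction_sum:
  "act Yp (\<lambda>v. \<Sum>j<Suc n. act (h j) (dual (yzmon n j)) v)
     = (\<lambda>v. \<Sum>j<n. act (h j) (dual (yzmon (n - 1) j)) v)"
proof
  fix v
  have "act Yp (\<lambda>v. \<Sum>j<Suc n. act (h j) (dual (yzmon n j)) v) v
      = (\<Sum>j<Suc n. act (h j) (act Yp (dual (yzmon n j))) v)"
    by (simp only: act_fun_sum[OF finite_lessThan] act_comm[of Yp])
  also have "\<dots> = (\<Sum>j<n. act (h j) (act Yp (dual (yzmon n j))) v)"
    by (simp add: yzmon_top act_Yp_dual_zmon)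
  also have "\<dots> = (\<Sum>j<n. act (h j) (dual (yzmon (n - 1) j)) v)"
  proof (intro sum.cong refl)
    fix j assume "j \<in> {..<n}"
    then obtain n' where n': "n = Suc n'" "j \<le> n'" by (cases n) auto
    then show "act (h j) (act Yp (dual (yzmon n j))) v = act (h j) (dual (yzmon (n - 1) j)) v"
      by (simp add: act_Yp_dual_yzmon)
  qed
  finally show "act Yp (\<lambda>v. \<Sum>j<Suc n. act (h j) (dual (yzmon n j)) v) v
      = (\<Sum>j<n. act (h j) (dual (yzmon (n - 1) j)) v)" .
qed

text \<open>Contracting \<open>z u\<^sub>j - y u\<^sub>j\<^sub>+\<^sub>1\<close> against the dual basis telescopes, so only the last
  term of the relation survives.\<close>

lemma contraction_last_term:
  fixes h u c :: "nat \<Rightarrow> 'k::comm_ring_1 mpoly3"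
  assumes rel: "\<And>v. (\<Sum>j<Suc n. act (h j) (dual (yzmon n j)) v) = 0"
    and uc: "\<And>j. j < n \<Longrightarrow> h j = Zp * u j - Yp * u (Suc j) + Xp * c j"
  shows "act (h n - Zp * u n) (dual (zmon n)) = (\<lambda>_. 0)"
proof
  fix v
  define Zt where "Zt j = (if j = 0 then 0 else act (u j) (dual (yzmon (n - 1) (j - 1))) v)" for j
  have act_Zp: "act (u j) (act Zp (dual (yzmon n j))) v = Zt j" if "j \<le> n" for j
  proof (cases j)
    case 0
    then show ?thesis by (simp add: Zt_def yzmon_0 act_Zp_dual_ymon)
  next
    case (Suc j')
    with that obtain n' where "n = Suc n'" "j' \<le> n'" by (cases n) auto
    then show ?thesis using Suc by (simp add: Zt_def act_Zp_dual_yzmon)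
  qed
  have act_Yp: "act (u (Suc j)) (act Yp (dual (yzmon n j))) v = Zt (Suc j)" if "j < n" for j
  proof -
    from that obtain n' where "n = Suc n'" "j \<le> n'" by (cases n) auto
    then show ?thesis by (simp add: Zt_def act_Yp_dual_yzmon)
  qed
  have "act (h j) (dual (yzmon n j)) v = Zt j - Zt (Suc j)" if "j < n" for j
    using that by (simp add: uc act_add act_diff act_Zp act_Yp act_mult_rev act_Xp_dual_xfree)
  then have "(\<Sum>j<n. act (h j) (dual (yzmon n j)) v) = Zt 0 - Zt n"
    by (simp add: sum_lessThan_telescope')
  moreover have "act (h n) (dual (yzmon n n)) v = act (h n - Zp * u n) (dual (zmon n)) v + Zt n"
    using act_Zp[of n] by (simp add: act_diff act_mult_rev yzmon_top)
  ultimately show "act (h n - Zp * u n) (dual (zmon n)) v = 0"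
    using rel[of v] by (simp add: Zt_def)
qed

lemma act_dual_zmon_eq_0_decomp:
  fixes t :: "'k::comm_ring_1 mpoly3"
  assumes "act t (dual (zmon n)) = (\<lambda>_. 0)"
  obtains A B C where "t = Xp * C + Yp * A + mon (zmon (Suc n)) * B"
proof -
  have coeff_zmon: "lookup t (zmon k) = 0" if "k \<le> n" for k
  proof -
    have "zmon n = zmon (n - k) + zmon k" using that by (simp add: zmon_add[symmetric])
    then have "lookup t (zmon k) = act t (dual (zmon n)) (zmon (n - k))"
      by (simp add: act_eq_pair_mon pair_dual)
    then show ?thesis using assms by simp
  qed
  define P1 where "P1 m = (lookup m VX \<noteq> 0)" for m :: mono
  define P2 where "P2 m = (lookup m VX = 0 \<and> lookup m VY \<noteq> 0)" for m :: mono
  define P3 where "P3 m = (lookup m VX = 0 \<and> lookup m VY = 0)" for m :: mono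
  have split: "t = mfilter P1 t + mfilter P2 t + mfilter P3 t"
    by (rule poly_mapping_eqI) (simp add: lookup_add lookup_mfilter P1_def P2_def P3_def)
  obtain C where C: "mfilter P1 t = mon X1 * C"
  proof (rule mon_dvd_of_keysE)
    fix k assume "k \<in> keys (mfilter P1 t)"
    then have "1 \<le> lookup k VX" using keys_mfilter[of k P1 t] by (simp add: P1_def)
    then show "\<exists>q. k = X1 + q" by (simp only: ex_X1_add_iff)
  qed
  obtain A where A: "mfilter P2 t = mon (ymon 1) * A"
  proof (rule mon_dvd_of_keysE)
    fix k assume "k \<in> keys (mfilter P2 t)"
    then have "1 \<le> lookup k VY" using keys_mfilter[of k P2 t] by (simp add: P2_def)
    then show "\<exists>q. k = ymon 1 + q" by (simp only: ex_ymon_add_iff)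
  qed
  obtain B where B: "mfilter P3 t = mon (zmon (Suc n)) * B"
  proof (rule mon_dvd_of_keysE)
    fix k assume "k \<in> keys (mfilter P3 t)"
    then have k: "P3 k" "k \<in> keys t" using keys_mfilter[of k P3 t] by auto
    then have k_eq: "k = zmon (lookup k VZ)" by (intro mono_eqI) (simp_all add: P3_def)
    have "\<not> lookup k VZ \<le> n"
      using coeff_zmon k(2) k_eq by (metis in_keys_iff)
    then show "\<exists>q. k = zmon (Suc n) + q" by (simp add: ex_zmon_add_iff)
  qed
  show thesis
    by (rule that[of C A B]) (use split A B C in \<open>simp add: Xp_eq_mon Yp_eq_mon\<close>)
qed

lemma contraction_syzygy:
  fixes h :: "nat \<Rightarrow> 'k::field mpoly3"
  assumes "(\<lambda>v. \<Sum>j<n. act (h j) (dual (yzmon (n - 1) j)) v) = (\<lambda>_. 0)"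
  shows "\<exists>u c. \<forall>j<n. h j = Zp * u j - Yp * u (Suc j) + Xp * c j"
  using assms
proof (induction n arbitrary: h)
  case 0
  then show ?case by simp
next
  case (Suc n)
  have rel: "(\<Sum>j<Suc n. act (h j) (dual (yzmon n j)) v) = 0" for v
    using fun_cong[OF Suc.prems, of v] by simp
  have "(\<lambda>v. \<Sum>j<n. act (h j) (dual (yzmon (n - 1) j)) v) = (\<lambda>_. 0)"
    using act_Yp_contraction_sum[of h n] rel by simp
  then obtain u c where uc: "\<forall>j<n. h j = Zp * u j - Yp * u (Suc j) + Xp * c j"
    using Suc.IH by blast
  have "act (h n - Zp * u n) (dual (zmon n)) = (\<lambda>_. 0)"
    using rel uc by (intro contraction_last_term) auto
  then obtain A B C where ABC: "h n - Zp * u n = Xp * C + Yp * A + mon (zmon (Suc n)) * B"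
    by (rule act_dual_zmon_eq_0_decomp)
  define u' where "u' j = (if j = Suc n then - A else u j + mon (yzmon n j) * B)" for j
  define c' where "c' j = (if j = n then C else c j)" for j
  have "h j = Zp * u' j - Yp * u' (Suc j) + Xp * c' j" if "j < Suc n" for j
  proof (cases "j < n")
    case True
    have "zmon 1 + yzmon n j = ymon 1 + yzmon n (Suc j)"
      using True by (intro mono_eqI) (simp_all add: lookup_add)
    then have "Zp * mon (yzmon n j) = Yp * (mon (yzmon n (Suc j)) :: 'k mpoly3)"
      by (simp only: Zp_eq_mon Yp_eq_mon mon_add[symmetric])
    then show ?thesis
      using uc True by (simp add: u'_def c'_def algebra_simps)
  next
    case False
    then have j: "j = n" using that by simp
    have "Zp * mon (zmon n) = (mon (zmon (Suc n)) :: 'k mpoly3)"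
      by (simp only: Zp_eq_mon mon_add[symmetric] zmon_add[symmetric] plus_1_eq_Suc)
    then show ?thesis
      using j ABC by (simp add: u'_def c'_def yzmon_top algebra_simps)
  qed
  then show ?case by blast
qed

lemma xfree_hilbert_burch_eq_0:
  fixes g :: "nat \<Rightarrow> 'k::field mpoly3"
  assumes "\<forall>i\<le>n. xfree (hilbert_burch n g i) = 0"
  shows "\<forall>j<n. xfree (g j) = 0"
proof (intro allI impI)
  fix j assume "j < n"
  then show "xfree (g j) = 0"
  proof (induction j)
    case 0
    have "xfree (hilbert_burch n g 0) = 0" using assms by simp
    then have "Zp * xfree (g 0) = 0" using 0 by (simp add: hilbert_burch_def xfree_uminus xfree_Zp_mult)
    then show ?case using Zp_neq_0[where 'k='k] mult_eq_0_iff by blast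
  next
    case (Suc j)
    then have "xfree (g j) = 0" by simp
    have "xfree (hilbert_burch n g (Suc j)) = 0" using assms Suc.prems by simp
    then have "Zp * xfree (g (Suc j)) = 0" using Suc.prems \<open>xfree (g j) = 0\<close>
      by (simp add: hilbert_burch_def xfree_diff xfree_Zp_mult xfree_Yp_mult)
    then show ?case using Zp_neq_0[where 'k='k] mult_eq_0_iff by blast
  qed
qed

lemma xfree_transpose_hilbert_burch_kernel:
  fixes u :: "nat \<Rightarrow> 'k::field mpoly3"
  assumes "\<forall>j<n. xfree (Zp * u j - Yp * u (Suc j)) = 0"
  shows "\<exists>t. \<forall>i\<le>n. xfree (u i) = mon (yzmon n i) * t"
proof -
  define v where "v i = xfree (u i)" for i
  have rel: "Zp * v j = Yp * v (Suc j)" if "j < n" for j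
    using assms that by (simp add: v_def xfree_diff xfree_Zp_mult xfree_Yp_mult)
  have chain: "mon (zmon j) * v 0 = mon (ymon j) * v j" if "j \<le> n" for j
    using that
  proof (induction j)
    case 0
    then show ?case by simp
  next
    case (Suc j)
    have "mon (zmon (Suc j)) * v 0 = Zp * (mon (zmon j) * v 0)"
      by (simp only: Zp_eq_mon mult.assoc[symmetric] mon_add[symmetric] zmon_add[symmetric] plus_1_eq_Suc)
    also have "\<dots> = Zp * (mon (ymon j) * v j)" using Suc by simp
    also have "\<dots> = mon (ymon j) * (Zp * v j)" by (simp add: algebra_simps)
    also have "\<dots> = mon (ymon j) * (Yp * v (Suc j))" using rel[of j] Suc.prems by simp
    also have "\<dots> = mon (ymon (Suc j)) * v (Suc j)"
      by (simp only: Yp_eq_mon mult.assoc[symmetric] mon_add[symmetric] ymon_add[symmetric] add.commute[of j 1] plus_1_eq_Suc)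
    finally show ?case .
  qed
  have "var_dvd VY n (mon (zmon n) * v 0)"
    unfolding var_dvd_iff using chain[of n] by (auto simp: ymon_def)
  then have "var_dvd VY n (v 0)" by (simp add: var_dvd_mon_mult)
  then obtain t where t: "v 0 = mon (ymon n) * t" unfolding var_dvd_iff ymon_def by blast
  have "v i = mon (yzmon n i) * t" if "i \<le> n" for i
  proof -
    have "mon (ymon i) * v i = mon (zmon i) * (mon (ymon n) * t)" using chain[OF that] t by simp
    also have "\<dots> = mon (ymon i) * (mon (yzmon n i) * t)"
    proof -
      have "zmon i + ymon n = ymon i + yzmon n i" using that
        by (intro mono_eqI) (simp_all add: lookup_add)
      then show ?thesis by (simp only: mult.assoc[symmetric] mon_add[symmetric])
    qed
    finally show ?thesis using mon_neq_0[of "ymon i", where 'k='k] by simp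
  qed
  then show ?thesis unfolding v_def by blast
qed

definition hcomp_pred :: "nat \<Rightarrow> 'k::comm_ring_1 mpoly3 \<Rightarrow> 'k mpoly3" where
  "hcomp_pred D G = (if D = 0 then 0 else hcomp (D - 1) G)"

lemma hcomp_linear_mult: "homog 1 V \<Longrightarrow> hcomp D (V * G) = V * hcomp_pred D G"
  by (simp add: hcomp_homog_mult hcomp_pred_def)

lemma homog_hcomp_pred: "homog (D - 1) (hcomp_pred D G)"
  by (simp add: hcomp_pred_def homog_hcomp)

lemma sum_hilbert_burch:
  assumes "i \<le> n"
  shows "(\<Sum>j<n. (Yp * cst (if i = Suc j then 1 else 0) - Zp * cst (if i = j then 1 else 0)) * G j) = hilbert_burch n G i"
proof -
  have "(\<Sum>j<n. (Yp * cst (if i = Suc j then 1 else 0) - Zp * cst (if i = j then 1 else 0)) * G j)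
      = (\<Sum>j<n. if j = i - 1 \<and> 0 < i then Yp * G j else 0) - (\<Sum>j<n. if j = i then Zp * G j else 0)"
    unfolding sum_subtractf[symmetric]
  proof (intro sum.cong refl)
    fix j
    show "(Yp * cst (if i = Suc j then 1 else 0) - Zp * cst (if i = j then 1 else 0)) * G j = (if j = i - 1 \<and> 0 < i then Yp * G j else 0) - (if j = i then Zp * G j else 0)"
      by (cases "i = j"; cases "i = Suc j") auto
  qed
  also have "\<dots> = hilbert_burch n G i"
  proof -
    have "(\<Sum>j<n. if j = i - 1 \<and> 0 < i then Yp * G j else 0) = (if 0 < i then Yp * G (i - 1) else 0)"
    proof (cases "0 < i")
      case True
      then have "i - 1 < n" using assms by arith
      then show ?thesis using True by (simp add: sum.delta')
    qed simp
    moreover have "(\<Sum>j<n. if j = i then Zp * G j else 0) = (if i < n then Zp * G i else 0)"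
      by (simp add: sum.delta')
    ultimately show ?thesis by (simp add: hilbert_burch_def)
  qed
  finally show ?thesis .
qed

lemma sum_hilbert_burch_transpose:
  assumes "j < n"
  shows "(\<Sum>i\<le>n. (- (Yp * cst (if i = Suc j then 1 else 0)) + Zp * cst (if i = j then 1 else 0)) * U i) = Zp * U j - Yp * U (Suc j)"
proof -
  have "(\<Sum>i\<le>n. (- (Yp * cst (if i = Suc j then 1 else 0)) + Zp * cst (if i = j then 1 else 0)) * U i)
      = (\<Sum>i\<le>n. if i = j then Zp * U i else 0) - (\<Sum>i\<le>n. if i = Suc j then Yp * U i else 0)"
    unfolding sum_subtractf[symmetric]
  proof (intro sum.cong refl)
    fix i
    show "(- (Yp * cst (if i = Suc j then 1 else 0)) + Zp * cst (if i = j then 1 else 0)) * U i = (if i = j then Zp * U i else 0) - (if i = Suc j then Yp * U i else 0)"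
      by (cases "i = j"; cases "i = Suc j") auto
  qed
  also have "\<dots> = Zp * U j - Yp * U (Suc j)" using assms by (simp add: sum.delta')
  finally show ?thesis .
qed

lemma xfree_hilbert_burch: "xfree (hilbert_burch n g i) = hilbert_burch n (\<lambda>j. xfree (g j)) i"
  by (simp add: hilbert_burch_def xfree_diff xfree_Yp_mult xfree_Zp_mult)

lemma hcomp_hilbert_burch: "hcomp D (hilbert_burch n g i) = hilbert_burch n (\<lambda>j. hcomp_pred D (g j)) i"
  by (simp add: hilbert_burch_def hcomp_diff hcomp_linear_mult homog_Yp homog_Zp)

lemma yzmon_syzygy_homog:
  fixes a :: "nat \<Rightarrow> 'k::field mpoly3"
  assumes h: "\<forall>i\<le>n. homog D (a i)" and r: "\<forall>i\<le>n. xfree (a i) = a i"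
    and s: "(\<Sum>i\<le>n. mon (yzmon n i) * a i) = 0"
  shows "\<exists>g. (\<forall>j. homog (D - 1) (g j) \<and> xfree (g j) = g j \<and> (D = 0 \<longrightarrow> g j = 0))
             \<and> (\<forall>i\<le>n. a i = hilbert_burch n g i)"
proof -
  obtain g where g: "\<forall>i\<le>n. a i = hilbert_burch n g i" using yzmon_syzygy[OF s] by blast
  define g' where "g' = (\<lambda>j. xfree (hcomp_pred D (g j)))"
  have "a i = hilbert_burch n g' i" if "i \<le> n" for i
  proof -
    have "a i = xfree (hcomp D (a i))" using h r that by (simp add: hcomp_homog)
    also have "\<dots> = xfree (hcomp D (hilbert_burch n g i))" using g that by simp
    also have "\<dots> = hilbert_burch n g' i" by (simp add: hcomp_hilbert_burch xfree_hilbert_burch g'_def)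
    finally show ?thesis .
  qed
  moreover have "homog (D - 1) (g' j) \<and> xfree (g' j) = g' j \<and> (D = 0 \<longrightarrow> g' j = 0)" for j
  proof (intro conjI)
    show "homog (D - 1) (g' j)" unfolding g'_def by (rule homog_xfree[OF homog_hcomp_pred])
    show "xfree (g' j) = g' j" by (simp add: g'_def xfree_idem)
    show "D = 0 \<longrightarrow> g' j = 0" by (simp add: g'_def hcomp_pred_def)
  qed
  ultimately show ?thesis by blast
qed

lemma contraction_syzygy_homog:
  fixes h :: "nat \<Rightarrow> 'k::field mpoly3"
  assumes hh: "\<forall>j<n. homog D (h j)"
    and c: "(\<lambda>v. \<Sum>j<n. act (h j) (dual (yzmon (n - 1) j)) v) = (\<lambda>_. 0)"
  shows "\<exists>u. (\<forall>i. homog (D - 1) (u i) \<and> xfree (u i) = u i \<and> (D = 0 \<longrightarrow> u i = 0))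
             \<and> (\<forall>j<n. xfree (h j) = Zp * u j - Yp * u (Suc j))"
proof -
  obtain u c where uc: "\<forall>j<n. h j = Zp * u j - Yp * u (Suc j) + Xp * c j" using contraction_syzygy[OF c] by blast
  define u' where "u' = (\<lambda>i. xfree (hcomp_pred D (u i)))"
  have "xfree (h j) = Zp * u' j - Yp * u' (Suc j)" if "j < n" for j
  proof -
    have "xfree (h j) = xfree (hcomp D (h j))" using hh that by (simp add: hcomp_homog)
    also have "\<dots> = xfree (hcomp D (Zp * u j - Yp * u (Suc j) + Xp * c j))" using uc that by simp
    also have "\<dots> = Zp * u' j - Yp * u' (Suc j)"
      by (simp add: u'_def hcomp_add hcomp_diff hcomp_linear_mult homog_Xp homog_Yp homog_Zp xfree_add xfree_diff xfree_Xp_mult xfree_Yp_mult xfree_Zp_mult)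
    finally show ?thesis .
  qed
  moreover have "homog (D - 1) (u' i) \<and> xfree (u' i) = u' i \<and> (D = 0 \<longrightarrow> u' i = 0)" for i
  proof (intro conjI)
    show "homog (D - 1) (u' i)" unfolding u'_def by (rule homog_xfree[OF homog_hcomp_pred])
    show "xfree (u' i) = u' i" by (simp add: u'_def xfree_idem)
    show "D = 0 \<longrightarrow> u' i = 0" by (simp add: u'_def hcomp_pred_def)
  qed
  ultimately show ?thesis by blast
qed

lemma xfree_transpose_hilbert_burch_kernel_homog:
  fixes u :: "nat \<Rightarrow> 'k::field mpoly3"
  assumes hu: "\<forall>i\<le>n. homog D (u i)"
    and c: "\<forall>j<n. xfree (Zp * u j - Yp * u (Suc j)) = 0"
  shows "\<exists>t. homog (D - n) t \<and> xfree t = t \<and> (D < n \<longrightarrow> t = 0)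
             \<and> (\<forall>i\<le>n. xfree (u i) = mon (yzmon n i) * t)"
proof -
  obtain t where t: "\<forall>i\<le>n. xfree (u i) = mon (yzmon n i) * t" using xfree_transpose_hilbert_burch_kernel[OF c] by blast
  define t' where "t' = (if n \<le> D then xfree (hcomp (D - n) t) else 0)"
  have "xfree (u i) = mon (yzmon n i) * t'" if "i \<le> n" for i
  proof -
    have hm: "homog n (mon (yzmon n i) :: 'k mpoly3)" using homog_mon[of "yzmon n i"] mdeg_yzmon[OF that] by simp
    have "xfree (u i) = xfree (xfree (hcomp D (u i)))" using hu that by (simp add: hcomp_homog xfree_idem)
    also have "\<dots> = xfree (hcomp D (mon (yzmon n i) * t))" using t that by (simp add: xfree_hcomp)
    also have "\<dots> = mon (yzmon n i) * t'"
      by (simp add: hcomp_homog_mult[OF hm] t'_def xfree_mon_mult)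
    finally show ?thesis .
  qed
  moreover have "homog (D - n) t' \<and> xfree t' = t' \<and> (D < n \<longrightarrow> t' = 0)"
    by (simp add: t'_def homog_xfree homog_hcomp xfree_idem)
  ultimately show ?thesis by blast
qed

lemma sum_Bidx: "(\<Sum>i\<in>Bidx n. f i) = (\<Sum>m\<in>M0 (n - 1). f (Inl m)) + (\<Sum>m\<in>M0 n. f (Inr m))"
  unfolding Bidx_def
  by (subst sum.union_disjoint) (auto simp: sum.reindex)

lemma finite_Bidx[simp]: "finite (Bidx n)" by (simp add: Bidx_def)

lemma b3_b1: "b3 n \<Phi> j = b1 n \<Phi> j"
  by (cases j) simp_all

lemma homog_1_mult_cst: "homog 1 V \<Longrightarrow> homog 1 (V * cst c)"
proof -
  assume "homog 1 V"
  then have "homog (1 + 0) (V * cst c)" by (rule homog_mult[OF _ homog_cst])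
  then show ?thesis by simp
qed

lemma Fmod_add: "a \<in> Fmod n \<Longrightarrow> b \<in> Fmod n \<Longrightarrow> (\<lambda>k. a k + b k) \<in> Fmod n"
  by (simp add: Fmod_def)

lemma Fmod_diff: "a \<in> Fmod n \<Longrightarrow> b \<in> Fmod n \<Longrightarrow> (\<lambda>k. a k - b k) \<in> Fmod n"
  by (simp add: Fmod_def)

lemma Fmod_scale: "a \<in> Fmod n \<Longrightarrow> (\<lambda>k. r * a k) \<in> Fmod n"
  by (simp add: Fmod_def)

lemma Fmod_sum: "finite A \<Longrightarrow> (\<And>d. d \<in> A \<Longrightarrow> w d \<in> Fmod n) \<Longrightarrow> (\<lambda>k. \<Sum>d\<in>A. w d k) \<in> Fmod n"
  by (simp add: Fmod_def)

lemma beta2_Fmod: "beta2 n \<Phi> w \<in> Fmod n"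
  by (simp add: Fmod_def beta2_def)

lemma beta3_Fmod: "beta3 n \<Phi> r \<in> Fmod n"
  by (simp add: Fmod_def beta3_def)

lemma beta2_add: "beta2 n \<Phi> (\<lambda>k. a k + b k) = (\<lambda>i. beta2 n \<Phi> a i + beta2 n \<Phi> b i)"
  by (rule ext) (simp add: beta2_def distrib_left sum.distrib)

lemma beta2_scale: "beta2 n \<Phi> (\<lambda>k. r * a k) = (\<lambda>i. r * beta2 n \<Phi> a i)"
  by (rule ext) (simp add: beta2_def sum_distrib_left algebra_simps)

lemma beta2_sum: "finite A \<Longrightarrow> beta2 n \<Phi> (\<lambda>k. \<Sum>d\<in>A. w d k) = (\<lambda>i. \<Sum>d\<in>A. beta2 n \<Phi> (w d) i)"
  by (rule ext) (auto simp: beta2_def sum_distrib_left intro: sum.swap)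

lemma beta1_diff: "beta1 n \<Phi> (\<lambda>k. a k - b k) = beta1 n \<Phi> a - beta1 n \<Phi> b"
  by (simp add: beta1_def right_diff_distrib sum_subtractf)

lemma beta1_scale: "beta1 n \<Phi> (\<lambda>k. r * a k) = r * beta1 n \<Phi> a"
  by (simp add: beta1_def sum_distrib_left algebra_simps)

lemma beta3_sum: "finite A \<Longrightarrow> beta3 n \<Phi> (\<Sum>d\<in>A. r d) = (\<lambda>i. \<Sum>d\<in>A. beta3 n \<Phi> (r d) i)"
  by (rule ext) (simp add: beta3_def sum_distrib_left)

lemma homog_b2: "homog 1 (b2 n \<Phi> i j)"
  by (cases i; cases j; simp only: b2.simps; (rule homog_add homog_diff homog_1_mult_cst homog_Xp homog_Yp homog_Zp)+)

lemma homog_beta2: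
  assumes "\<forall>k. homog (D - 1) (w k)" "D = 0 \<longrightarrow> (\<forall>k. w k = 0)"
  shows "homog D (beta2 n \<Phi> w i)"
proof (cases "D = 0")
  case True
  then show ?thesis using assms by (simp add: beta2_def)
next
  case False
  have "homog (1 + (D - 1)) (b2 n \<Phi> i j * w j)" for j
    using homog_mult[OF homog_b2 assms(1)[rule_format]] .
  then have "homog D (b2 n \<Phi> i j * w j)" for j using False by simp
  then show ?thesis by (simp add: beta2_def homog_sum)
qed

lemma beta2_diff: "beta2 n \<Phi> (\<lambda>k. a k - b k) = (\<lambda>i. beta2 n \<Phi> a i - beta2 n \<Phi> b i)"
  by (rule ext) (simp add: beta2_def right_diff_distrib sum_subtractf)

section \<open>The resolution\<close>

locale inverse_system =
  fixes n :: nat and \<Phi> :: "'k::field dp"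
  assumes n_pos: "n > 0"
    and Phi_Dsp: "\<Phi> \<in> Dsp (2 * n - 1)"
    and pmap_bij: "bij_betw (pmap \<Phi>) (Sym (n - 1)) (Dsp (n - 1))"
begin

abbreviation Pinv where "Pinv \<equiv> pinv n \<Phi>"

abbreviation xPhi where "xPhi \<equiv> act Xp \<Phi>"

lemma pinv_homog: "w \<in> Dsp (n - 1) \<Longrightarrow> homog (n - 1) (Pinv w)"
  using inv_into_into[of w "pmap \<Phi>" "Sym (n - 1)"] bij_betw_imp_surj_on[OF pmap_bij]
  by (simp add: pinv_def Sym_def)

lemma act_pinv: "w \<in> Dsp (n - 1) \<Longrightarrow> act (Pinv w) xPhi = w"
  using f_inv_into_f[of w "pmap \<Phi>" "Sym (n - 1)"] bij_betw_imp_surj_on[OF pmap_bij]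
  by (simp add: pinv_def pmap_def)

lemma pinv_act: "homog (n - 1) \<mu> \<Longrightarrow> Pinv (act \<mu> xPhi) = \<mu>"
  using inv_into_f_f[OF bij_betw_imp_inj_on[OF pmap_bij], of \<mu>] by (simp add: pinv_def pmap_def Sym_def)

lemma act_xPhi_Dsp: "homog (n - 1) \<mu> \<Longrightarrow> act \<mu> xPhi \<in> Dsp (n - 1)"
  using bij_betw_imp_surj_on[OF pmap_bij] by (auto simp: Sym_def pmap_def)

lemma pinv_add:
  assumes "w1 \<in> Dsp (n - 1)" "w2 \<in> Dsp (n - 1)"
  shows "Pinv (\<lambda>v. w1 v + w2 v) = Pinv w1 + Pinv w2"
proof -
  have h: "homog (n - 1) (Pinv w1 + Pinv w2)" using pinv_homog act_pinv assms by (simp add: homog_add)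
  have "act (Pinv w1 + Pinv w2) xPhi = (\<lambda>v. w1 v + w2 v)" using pinv_homog act_pinv assms by (simp add: act_add)
  then show ?thesis using pinv_act[OF h] by simp
qed

lemma pinv_sum:
  assumes "finite I" "\<And>i. i \<in> I \<Longrightarrow> w i \<in> Dsp (n - 1)"
  shows "Pinv (\<lambda>v. \<Sum>i\<in>I. c i * w i v) = (\<Sum>i\<in>I. cst (c i) * Pinv (w i))"
proof -
  have h: "homog (n - 1) (\<Sum>i\<in>I. cst (c i) * Pinv (w i))"
    using pinv_homog act_pinv assms by (intro homog_sum homog_cst_mult) auto
  have "act (\<Sum>i\<in>I. cst (c i) * Pinv (w i)) xPhi = (\<lambda>v. \<Sum>i\<in>I. c i * w i v)"
    using pinv_homog act_pinv assms by (simp add: act_sum act_cst_mult)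
  then show ?thesis using pinv_act[OF h] by simp
qed

lemma pair_pinv_sym:
  assumes "w1 \<in> Dsp (n - 1)" "w2 \<in> Dsp (n - 1)"
  shows "pair (Pinv w1) w2 = pair (Pinv w2) w1"
proof -
  have "pair (Pinv w1) w2 = act (Pinv w1 * Pinv w2) xPhi 0"
    using act_pinv[OF assms(2)] by (simp add: pair_def act_mult)
  also have "\<dots> = act (Pinv w2 * Pinv w1) xPhi 0" by (simp add: mult.commute)
  also have "\<dots> = pair (Pinv w2) w1"
    using act_pinv[OF assms(1)] by (simp add: pair_def act_mult)
  finally show ?thesis .
qed

lemma act_Phi_Dsp: "homog n F \<Longrightarrow> act F \<Phi> \<in> Dsp (n - 1)"
  using act_Dsp(1)[OF _ Phi_Dsp, of n F] n_pos by (simp add: diff_diff_add mult_2)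

lemma sum_b1_Inl_mult:
  assumes "w \<in> Dsp (n - 1)" "act Xp w = (\<lambda>_. 0)"
  shows "(\<Sum>m\<in>M0 (n - 1). b1 n \<Phi> (Inl m) * cst (w m)) = Xp * Pinv w"
proof -
  have "Pinv w = Pinv (\<lambda>v. \<Sum>m\<in>M0 (n - 1). w m * dual m v)" using dual_expand[OF assms] by simp
  also have "\<dots> = (\<Sum>m\<in>M0 (n - 1). cst (w m) * Pinv (dual m))"
    by (rule pinv_sum) (simp_all add: dual_Dsp_M0)
  finally show ?thesis by (simp add: sum_distrib_left algebra_simps)
qed

lemma homog_Yp_Zp_pinv:
  assumes "wa \<in> Dsp (n - 1)" "wb \<in> Dsp (n - 1)"
  shows "homog n (Yp * Pinv wa - Zp * Pinv wb)"
  using homog_diff[OF homog_mult[OF homog_Yp pinv_homog[OF assms(1)]]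
      homog_mult[OF homog_Zp pinv_homog[OF assms(2)]]] n_pos
  by simp

lemma act_Xp_Yp_Zp_pinv:
  assumes "wa \<in> Dsp (n - 1)" "wb \<in> Dsp (n - 1)" "act Yp wa = act Zp wb"
  shows "act Xp (act (Yp * Pinv wa - Zp * Pinv wb) \<Phi>) = (\<lambda>_. 0)"
proof -
  have "act Xp (act (Yp * Pinv wa - Zp * Pinv wb) \<Phi>) = act (Yp * Pinv wa - Zp * Pinv wb) xPhi"
    by (rule act_comm)
  also have "\<dots> = (\<lambda>v. act Yp wa v - act Zp wb v)"
    using act_pinv[OF assms(1)] act_pinv[OF assms(2)] by (simp add: act_diff act_mult)
  finally show ?thesis using assms(3) by simp
qed

lemma act_Phi_Dsp_M0:
  assumes "m \<in> M0 (n - 1)"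
  shows "act (Zp * mon m) \<Phi> \<in> Dsp (n - 1)" and "act (Yp * mon m) \<Phi> \<in> Dsp (n - 1)"
proof -
  have "homog (1 + (n - 1)) (Zp * mon m)" "homog (1 + (n - 1)) (Yp * mon m)"
    by (intro homog_mult homog_Zp homog_Yp homog_mon_M0[OF assms])+
  then show "act (Zp * mon m) \<Phi> \<in> Dsp (n - 1)" and "act (Yp * mon m) \<Phi> \<in> Dsp (n - 1)"
    using n_pos act_Phi_Dsp by simp_all
qed

text \<open>The reconstruction formula: \<open>b\<^sub>1(m\<^sub>2)\<close> recovers the \<open>x\<close>-free part of \<open>F\<close>, and the
  \<open>b\<^sub>1(m\<^sub>1\<^sup>*)\<close> recover \<open>x p\<^sup>-\<^sup>1(F(\<Phi>))\<close>, which accounts for the rest because \<open>p\<close> is injective.\<close>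

lemma b1_reconstruction:
  assumes hF: "homog n F" and cF: "act Xp (act F \<Phi>) = (\<lambda>_. 0)"
  shows "(\<Sum>m\<in>M0 (n - 1). b1 n \<Phi> (Inl m) * cst (act F \<Phi> m))
       + (\<Sum>m\<in>M0 n. b1 n \<Phi> (Inr m) * cst (lookup F m)) = F"
proof -
  obtain G where G: "homog (n - 1) G" "F = (\<Sum>m\<in>M0 n. cst (lookup F m) * mon m) + Xp * G"
    using homog_eq_M0_sum_plus_Xp[OF hF n_pos] by blast
  define FS where "FS = (\<Sum>m\<in>M0 n. cst (lookup F m) * mon m)"
  have hFS: "homog n FS" unfolding FS_def by (intro homog_sum homog_cst_mult homog_mon_M0) auto
  have wD: "act (mon m) \<Phi> \<in> Dsp (n - 1)" if "m \<in> M0 n" for m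
    using act_Phi_Dsp[OF homog_mon_M0[OF that]] .
  have "act FS \<Phi> = (\<lambda>v. \<Sum>m\<in>M0 n. lookup F m * act (mon m) \<Phi> v)"
    unfolding FS_def by (simp add: act_sum act_cst_mult)
  then have "(\<Sum>m\<in>M0 n. cst (lookup F m) * Pinv (act (mon m) \<Phi>)) = Pinv (act FS \<Phi>)"
    using pinv_sum[of "M0 n" "\<lambda>m. act (mon m) \<Phi>" "lookup F"] wD by simp
  moreover have "(\<Sum>m\<in>M0 n. b1 n \<Phi> (Inr m) * cst (lookup F m))
      = FS - Xp * (\<Sum>m\<in>M0 n. cst (lookup F m) * Pinv (act (mon m) \<Phi>))"
    unfolding FS_def by (simp add: sum_distrib_left sum_subtractf algebra_simps)
  ultimately have inr: "(\<Sum>m\<in>M0 n. b1 n \<Phi> (Inr m) * cst (lookup F m)) = FS - Xp * Pinv (act FS \<Phi>)"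
    by simp
  have "act F \<Phi> = (\<lambda>v. act FS \<Phi> v + act G xPhi v)"
    using G(2) by (simp add: FS_def[symmetric] act_add act_mult_rev)
  then have "Pinv (act F \<Phi>) = Pinv (act FS \<Phi>) + G"
    using pinv_add[OF act_Phi_Dsp[OF hFS] act_xPhi_Dsp[OF G(1)]] pinv_act[OF G(1)] by simp
  then show ?thesis
    using sum_b1_Inl_mult[OF act_Phi_Dsp[OF hF] cF] inr G(2) by (simp add: FS_def algebra_simps)
qed

lemma homog_Xp_pinv: "w \<in> Dsp (n - 1) \<Longrightarrow> homog n (Xp * Pinv w)"
  using homog_mult[OF homog_Xp pinv_homog] n_pos by fastforce

lemma b1_b2_Inl:
  assumes m: "m \<in> M0 (n - 1)"
  shows "(\<Sum>i\<in>Bidx n. b1 n \<Phi> i * b2 n \<Phi> i (Inl m)) = 0"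
proof -
  define a where "a = Pinv (act (Zp * mon m) \<Phi>)"
  define b where "b = Pinv (act (Yp * mon m) \<Phi>)"
  define F where "F = Yp * a - Zp * b"
  have "act Yp (act (Zp * mon m) \<Phi>) = act Zp (act (Yp * mon m) \<Phi>)"
    by (simp add: act_mult[symmetric] algebra_simps)
  then have hF: "homog n F" and cF: "act Xp (act F \<Phi>) = (\<lambda>_. 0)"
    unfolding F_def a_def b_def
    by (intro homog_Yp_Zp_pinv act_Xp_Yp_Zp_pinv act_Phi_Dsp_M0[OF m])+
  have col_Inl: "b2 n \<Phi> (Inl m1) (Inl m) = Xp * cst (act F \<Phi> m1)" for m1
    by (simp add: F_def act_Yp_Zp_comb a_def b_def)
  have col_Inr: "b2 n \<Phi> (Inr m2) (Inl m) = Xp * cst (lookup F m2)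
      + Yp * cst (lookup (mon (zmon 1 + m) :: 'k mpoly3) m2)
      - Zp * cst (lookup (mon (ymon 1 + m) :: 'k mpoly3) m2)" for m2
    using pair_Yp_Zp_dual[of a m2 b] by (simp add: F_def a_def b_def Zp_eq_mon Yp_eq_mon mon_add)
  have pick_z: "(\<Sum>m2\<in>M0 n. b1 n \<Phi> (Inr m2) * cst (lookup (mon (zmon 1 + m) :: 'k mpoly3) m2))
      = b1 n \<Phi> (Inr (zmon 1 + m))"
    using zmon1_add_M0[OF m] n_pos by (intro sum_mult_lookup_mon) simp_all
  have pick_y: "(\<Sum>m2\<in>M0 n. b1 n \<Phi> (Inr m2) * cst (lookup (mon (ymon 1 + m) :: 'k mpoly3) m2))
      = b1 n \<Phi> (Inr (ymon 1 + m))"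
    using ymon1_add_M0[OF m] n_pos by (intro sum_mult_lookup_mon) simp_all
  have "(\<Sum>i\<in>Bidx n. b1 n \<Phi> i * b2 n \<Phi> i (Inl m))
      = Xp * ((\<Sum>m1\<in>M0 (n - 1). b1 n \<Phi> (Inl m1) * cst (act F \<Phi> m1))
              + (\<Sum>m2\<in>M0 n. b1 n \<Phi> (Inr m2) * cst (lookup F m2)))
        + Yp * (\<Sum>m2\<in>M0 n. b1 n \<Phi> (Inr m2) * cst (lookup (mon (zmon 1 + m) :: 'k mpoly3) m2))
        - Zp * (\<Sum>m2\<in>M0 n. b1 n \<Phi> (Inr m2) * cst (lookup (mon (ymon 1 + m) :: 'k mpoly3) m2))"
    unfolding sum_Bidx col_Inl col_Inr
    by (simp add: sum_distrib_left sum.distrib sum_subtractf algebra_simps)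
  also have "\<dots> = Xp * F + Yp * b1 n \<Phi> (Inr (zmon 1 + m)) - Zp * b1 n \<Phi> (Inr (ymon 1 + m))"
    unfolding pick_z pick_y b1_reconstruction[OF hF cF] ..
  also have "\<dots> = 0"
    by (simp add: F_def a_def b_def Zp_eq_mon Yp_eq_mon mon_add algebra_simps)
  finally show ?thesis .
qed

lemma b1_b2_Inr:
  assumes m: "m \<in> M0 n"
  shows "(\<Sum>i\<in>Bidx n. b1 n \<Phi> i * b2 n \<Phi> i (Inr m)) = 0"
proof -
  define wa :: "'k dp" where "wa = act Zp (dual m)"
  define wb :: "'k dp" where "wb = act Yp (dual m)"
  define F where "F = Yp * Pinv wa - Zp * Pinv wb"
  have waD: "wa \<in> Dsp (n - 1)" and wbD: "wb \<in> Dsp (n - 1)"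
    unfolding wa_def wb_def using act_dual_Dsp_M0[OF m] by simp_all
  have xm: "act Xp (dual m) = (\<lambda>_. 0)" using act_Xp_dual_xfree lookup_VX_M0[OF m] by blast
  have waX: "act Xp wa = (\<lambda>_. 0)" unfolding wa_def by (simp add: act_comm[of Xp] xm)
  have wbX: "act Xp wb = (\<lambda>_. 0)" unfolding wb_def by (simp add: act_comm[of Xp] xm)
  have hF: "homog n F" and cF: "act Xp (act F \<Phi>) = (\<lambda>_. 0)"
    unfolding F_def wa_def wb_def using waD wbD
    by (simp_all add: wa_def wb_def homog_Yp_Zp_pinv act_Xp_Yp_Zp_pinv act_comm[of Yp])
  have col_Inl: "b2 n \<Phi> (Inl m1) (Inr m) = Xp * cst (act F \<Phi> m1) - Yp * cst (wa m1) + Zp * cst (wb m1)"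
    if m1: "m1 \<in> M0 (n - 1)" for m1
  proof -
    have "pair (Pinv (act (Zp * mon m1) \<Phi>)) wb = pair (Pinv wb) (act (Zp * mon m1) \<Phi>)"
      and "pair (Pinv (act (Yp * mon m1) \<Phi>)) wa = pair (Pinv wa) (act (Yp * mon m1) \<Phi>)"
      using act_Phi_Dsp_M0[OF m1] waD wbD by (simp_all add: pair_pinv_sym)
    then show ?thesis by (simp add: F_def act_Yp_Zp_comb wa_def wb_def algebra_simps)
  qed
  have col_Inr: "b2 n \<Phi> (Inr m2) (Inr m) = Xp * cst (lookup F m2)" for m2
    using pair_Yp_Zp_dual[of "Pinv wa" m2 "Pinv wb"] by (simp add: F_def wa_def wb_def)
  have "(\<Sum>m1\<in>M0 (n - 1). b1 n \<Phi> (Inl m1) * b2 n \<Phi> (Inl m1) (Inr m))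
      = (\<Sum>m1\<in>M0 (n - 1). b1 n \<Phi> (Inl m1) * (Xp * cst (act F \<Phi> m1) - Yp * cst (wa m1) + Zp * cst (wb m1)))"
    by (intro sum.cong refl) (simp only: col_Inl)
  then have "(\<Sum>i\<in>Bidx n. b1 n \<Phi> i * b2 n \<Phi> i (Inr m))
      = (\<Sum>m1\<in>M0 (n - 1). b1 n \<Phi> (Inl m1) * (Xp * cst (act F \<Phi> m1) - Yp * cst (wa m1) + Zp * cst (wb m1)))
        + (\<Sum>m2\<in>M0 n. b1 n \<Phi> (Inr m2) * (Xp * cst (lookup F m2)))"
    unfolding sum_Bidx col_Inr by simp
  also have "\<dots> = Xp * ((\<Sum>m1\<in>M0 (n - 1). b1 n \<Phi> (Inl m1) * cst (act F \<Phi> m1))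
              + (\<Sum>m2\<in>M0 n. b1 n \<Phi> (Inr m2) * cst (lookup F m2)))
        - Yp * (\<Sum>m1\<in>M0 (n - 1). b1 n \<Phi> (Inl m1) * cst (wa m1))
        + Zp * (\<Sum>m1\<in>M0 (n - 1). b1 n \<Phi> (Inl m1) * cst (wb m1))"
    by (simp add: sum_distrib_left sum.distrib sum_subtractf algebra_simps)
  also have "\<dots> = Xp * F - Yp * (Xp * Pinv wa) + Zp * (Xp * Pinv wb)"
    unfolding sum_b1_Inl_mult[OF waD waX] sum_b1_Inl_mult[OF wbD wbX] b1_reconstruction[OF hF cF] ..
  also have "\<dots> = 0" by (simp add: F_def algebra_simps)
  finally show ?thesis .
qed

lemma b1_b2_zero:
  assumes "j \<in> Bidx n"
  shows "(\<Sum>i\<in>Bidx n. b1 n \<Phi> i * b2 n \<Phi> i j) = 0"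
proof -
  from assms consider (L) m where "m \<in> M0 (n - 1)" "j = Inl m" | (R) m where "m \<in> M0 n" "j = Inr m"
    unfolding Bidx_def by blast
  then show ?thesis
  proof cases
    case L then show ?thesis using b1_b2_Inl by simp
  next
    case R then show ?thesis using b1_b2_Inr by simp
  qed
qed

lemma b2_skew:
  assumes i: "i \<in> Bidx n" and j: "j \<in> Bidx n"
  shows "b2 n \<Phi> i j = - b2 n \<Phi> j i"
proof -
  from i j consider
      (LL) m1 m where "m1 \<in> M0 (n - 1)" "m \<in> M0 (n - 1)" "i = Inl m1" "j = Inl m"
    | (LR) m1 m where "i = Inl m1" "j = Inr m"
    | (RL) m1 m where "i = Inr m1" "j = Inl m"
    | (RR) m1 m where "m1 \<in> M0 n" "m \<in> M0 n" "i = Inr m1" "j = Inr m"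
    unfolding Bidx_def by blast
  then show ?thesis
  proof cases
    case LL
    note D = act_Phi_Dsp_M0[OF LL(1)] act_Phi_Dsp_M0[OF LL(2)]
    have "pair (Pinv (act (Zp * mon m1) \<Phi>)) (act (Yp * mon m) \<Phi>)
        = pair (Pinv (act (Yp * mon m) \<Phi>)) (act (Zp * mon m1) \<Phi>)"
      and "pair (Pinv (act (Yp * mon m1) \<Phi>)) (act (Zp * mon m) \<Phi>)
        = pair (Pinv (act (Zp * mon m) \<Phi>)) (act (Yp * mon m1) \<Phi>)"
      by (rule pair_pinv_sym; simp add: D)+
    then show ?thesis using LL by (simp add: cst_diff algebra_simps)
  next
    case RR
    note D = act_dual_Dsp_M0[OF RR(1)] act_dual_Dsp_M0[OF RR(2)]
    have "pair (Pinv (act Zp (dual m1))) (act Yp (dual m)) = pair (Pinv (act Yp (dual m))) (act Zp (dual m1))"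
      and "pair (Pinv (act Yp (dual m1))) (act Zp (dual m)) = pair (Pinv (act Zp (dual m))) (act Yp (dual m1))"
      by (rule pair_pinv_sym; simp add: D)+
    then show ?thesis using RR by (simp add: cst_diff algebra_simps)
  qed (simp_all add: act_dual_eq_lookup cst_diff cst_uminus algebra_simps)
qed

lemma b2_b3_zero:
  assumes "i \<in> Bidx n"
  shows "(\<Sum>j\<in>Bidx n. b2 n \<Phi> i j * b3 n \<Phi> j) = 0"
proof -
  have "(\<Sum>j\<in>Bidx n. b2 n \<Phi> i j * b3 n \<Phi> j) = (\<Sum>j\<in>Bidx n. - (b1 n \<Phi> j * b2 n \<Phi> j i))"
    by (intro sum.cong refl) (simp add: b3_b1 b2_skew[OF assms] mult.commute)
  also have "\<dots> = - (\<Sum>j\<in>Bidx n. b1 n \<Phi> j * b2 n \<Phi> j i)" by (simp add: sum_negf)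
  also have "\<dots> = 0" using b1_b2_zero[OF assms] by simp
  finally show ?thesis .
qed

lemma beta1_beta2_zero: "beta1 n \<Phi> (beta2 n \<Phi> w) = 0"
proof -
  have "beta1 n \<Phi> (beta2 n \<Phi> w) = (\<Sum>i\<in>Bidx n. \<Sum>j\<in>Bidx n. b1 n \<Phi> i * (b2 n \<Phi> i j * w j))"
    by (simp add: beta1_def beta2_def sum_distrib_left)
  also have "\<dots> = (\<Sum>j\<in>Bidx n. (\<Sum>i\<in>Bidx n. b1 n \<Phi> i * b2 n \<Phi> i j) * w j)"
    by (subst sum.swap) (simp add: sum_distrib_right mult.assoc)
  also have "\<dots> = 0" by (simp add: b1_b2_zero)
  finally show ?thesis .
qed

lemma beta2_beta3_zero: "beta2 n \<Phi> (beta3 n \<Phi> r) = (\<lambda>_. 0)"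
proof
  fix i
  have "(\<Sum>j\<in>Bidx n. b2 n \<Phi> i j * beta3 n \<Phi> r j) = (\<Sum>j\<in>Bidx n. b2 n \<Phi> i j * b3 n \<Phi> j) * r"
    by (simp add: beta3_def sum_distrib_right mult.assoc)
  then show "beta2 n \<Phi> (beta3 n \<Phi> r) i = 0"
    by (simp add: beta2_def b2_b3_zero)
qed

lemma homog_b1: "j \<in> Bidx n \<Longrightarrow> homog n (b1 n \<Phi> j)"
proof -
  assume "j \<in> Bidx n"
  then consider (L) m where "m \<in> M0 (n - 1)" "j = Inl m" | (R) m where "m \<in> M0 n" "j = Inr m"
    unfolding Bidx_def by blast
  then show ?thesis
  proof cases
    case L
    have "dual m \<in> Dsp (n - 1)" using dual_Dsp[of m] mdeg_M0[OF L(1)] by simp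
    then show ?thesis using L homog_Xp_pinv by simp
  next
    case R
    have "act (mon m) \<Phi> \<in> Dsp (n - 1)" using act_Phi_Dsp[OF homog_mon_M0[OF R(1)]] .
    have "homog n (mon m - Xp * Pinv (act (mon m) \<Phi>))" by (rule homog_diff[OF homog_mon_M0[OF R(1)] homog_Xp_pinv]) fact
    then show ?thesis using R by simp
  qed
qed

subsection \<open>The image of \<open>b\<^sub>1\<close>\<close>

lemma xPhi_Dsp: "xPhi \<in> Dsp (2 * n - 2)"
  using act_Dsp(1)[OF homog_Xp Phi_Dsp] by (simp add: diff_diff_add numeral_2_eq_2)

lemma act_hcomp:
  assumes w: "w \<in> Dsp N"
  shows "act (hcomp d \<mu>) w v = (if d + mdeg v = N then act \<mu> w v else 0)"
proof -
  have ks: "keys (hcomp d \<mu>) \<subseteq> keys \<mu>" unfolding hcomp_def using keys_mfilter by blast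
  have "(if mdeg u = d then lookup \<mu> u else 0) * w (u + v)
      = (if d + mdeg v = N then lookup \<mu> u * w (u + v) else 0)" for u
    using w by (auto simp: Dsp_def)
  then have "act (hcomp d \<mu>) w v
      = (\<Sum>u\<in>keys \<mu>. if d + mdeg v = N then lookup \<mu> u * w (u + v) else 0)"
    by (simp add: act_superset[OF finite_keys ks] lookup_hcomp)
  then show ?thesis by (simp add: act_def)
qed

lemma act_hcomp_xPhi: "act \<mu> xPhi = (\<lambda>_. 0) \<Longrightarrow> act (hcomp d \<mu>) xPhi = (\<lambda>_. 0)"
  by (rule ext) (simp add: act_hcomp[OF xPhi_Dsp])

definition ideal_b1 where "ideal_b1 = beta1 n \<Phi> ` Fmod n"

lemma ideal_b1_zero: "0 \<in> ideal_b1"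
proof -
  have m: "(\<lambda>_. 0) \<in> (Fmod n :: (bidx \<Rightarrow> 'k mpoly3) set)" by (simp add: Fmod_def)
  have e: "beta1 n \<Phi> (\<lambda>_. 0) = 0" by (simp add: beta1_def)
  show ?thesis unfolding ideal_b1_def by (rule rev_image_eqI[where f="beta1 n \<Phi>", OF m e[symmetric]])
qed

lemma ideal_b1_add: "a \<in> ideal_b1 \<Longrightarrow> b \<in> ideal_b1 \<Longrightarrow> a + b \<in> ideal_b1"
proof -
  assume "a \<in> ideal_b1" "b \<in> ideal_b1"
  then obtain f g where f: "f \<in> Fmod n" "a = beta1 n \<Phi> f" and g: "g \<in> Fmod n" "b = beta1 n \<Phi> g"
    unfolding ideal_b1_def by blast
  have m: "(\<lambda>i. f i + g i) \<in> Fmod n" using f g by (simp add: Fmod_def)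
  have e: "beta1 n \<Phi> (\<lambda>i. f i + g i) = a + b"
    using f g by (simp add: beta1_def distrib_left sum.distrib)
  show ?thesis unfolding ideal_b1_def by (rule rev_image_eqI[where f="beta1 n \<Phi>", OF m e[symmetric]])
qed

lemma ideal_b1_mult: "a \<in> ideal_b1 \<Longrightarrow> r * a \<in> ideal_b1"
proof -
  assume "a \<in> ideal_b1"
  then obtain f where f: "f \<in> Fmod n" "a = beta1 n \<Phi> f" unfolding ideal_b1_def by blast
  have m: "(\<lambda>i. r * f i) \<in> Fmod n" using f by (simp add: Fmod_def)
  have e: "beta1 n \<Phi> (\<lambda>i. r * f i) = r * a"
    using f by (simp add: beta1_def sum_distrib_left algebra_simps)
  show ?thesis unfolding ideal_b1_def by (rule rev_image_eqI[where f="beta1 n \<Phi>", OF m e[symmetric]])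
qed

lemma ideal_b1_gen: "j \<in> Bidx n \<Longrightarrow> b1 n \<Phi> j * c \<in> ideal_b1"
proof -
  assume j: "j \<in> Bidx n"
  have m: "(\<lambda>i. if i = j then c else 0) \<in> Fmod n" using j by (simp add: Fmod_def)
  have e: "beta1 n \<Phi> (\<lambda>i. if i = j then c else 0) = b1 n \<Phi> j * c"
  proof -
    have "beta1 n \<Phi> (\<lambda>i. if i = j then c else 0) = (\<Sum>i\<in>Bidx n. if i = j then b1 n \<Phi> i * c else 0)"
      unfolding beta1_def by (intro sum.cong) auto
    then show ?thesis using j by (simp add: sum.delta')
  qed
  show ?thesis unfolding ideal_b1_def by (rule rev_image_eqI[where f="beta1 n \<Phi>", OF m e[symmetric]])
qed

lemma ideal_b1_sum: "finite I \<Longrightarrow> (\<And>i. i \<in> I \<Longrightarrow> a i \<in> ideal_b1) \<Longrightarrow> (\<Sum>i\<in>I. a i) \<in> ideal_b1"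
  by (induction I rule: finite_induct) (simp_all add: ideal_b1_zero ideal_b1_add)

lemma act_b1_xPhi: "j \<in> Bidx n \<Longrightarrow> act (b1 n \<Phi> j) xPhi = (\<lambda>_. 0)"
proof -
  assume "j \<in> Bidx n"
  then consider (L) m where "m \<in> M0 (n - 1)" "j = Inl m" | (R) m where "m \<in> M0 n" "j = Inr m"
    unfolding Bidx_def by blast
  then show ?thesis
  proof cases
    case L
    have "dual m \<in> Dsp (n - 1)" using dual_Dsp[of m] mdeg_M0[OF L(1)] by simp
    then have pd: "act (Pinv (dual m)) xPhi = dual m" by (rule act_pinv)
    have "act (b1 n \<Phi> j) xPhi = act Xp (dual m)" using L by (simp add: act_mult pd)
    then show ?thesis using act_Xp_dual_xfree lookup_VX_M0[OF L(1)] by simp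
  next
    case R
    have wD: "act (mon m) \<Phi> \<in> Dsp (n - 1)" using act_Phi_Dsp[OF homog_mon_M0[OF R(1)]] .
    have "act (b1 n \<Phi> j) xPhi = (\<lambda>v. act (mon m) xPhi v - act Xp (act (mon m) \<Phi>) v)"
      using R by (simp add: act_diff act_mult act_pinv[OF wD])
    then show ?thesis by (simp add: act_comm[of "mon m"])
  qed
qed

lemma act_beta1_xPhi: "f \<in> Fmod n \<Longrightarrow> act (beta1 n \<Phi> f) xPhi = (\<lambda>_. 0)"
  by (simp add: beta1_def act_sum act_mult_rev[of "b1 n \<Phi> _"] act_b1_xPhi)

lemma act_ideal_b1_xPhi: "a \<in> ideal_b1 \<Longrightarrow> act a xPhi = (\<lambda>_. 0)"
  unfolding ideal_b1_def using act_beta1_xPhi by blast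

lemma pinv_zero: "Pinv (\<lambda>_. 0) = 0"
  using pinv_act[of 0] by simp

lemma annihilator_low_degree:
  assumes h: "homog d \<mu>" and dn: "d < n" and I: "act \<mu> xPhi = (\<lambda>_. 0)"
  shows "\<mu> = 0"
proof -
  define t :: "'k mpoly3" where "t = mon (ymon (n - 1 - d))"
  have ht: "homog (n - 1 - d) t" unfolding t_def using homog_mon[of "ymon (n - 1 - d)"] by simp
  have hmt: "homog (n - 1) (\<mu> * t)" using homog_mult[OF h ht] dn by simp
  have "act (\<mu> * t) xPhi = (\<lambda>_. 0)" by (simp add: act_mult_rev[of \<mu>] I)
  then have "\<mu> * t = 0" using pinv_act[OF hmt] pinv_zero by simp
  moreover have "t \<noteq> 0" unfolding t_def by (rule mon_neq_0)
  ultimately show ?thesis by simp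
qed

text \<open>Only the \<open>x\<close>-free part of \<open>\<mu>\<close> needs the generators \<open>b\<^sub>1(m\<^sub>2)\<close>: it lies in \<open>(y, z)\<^sup>n\<close>, and
  \<open>b\<^sub>1(m\<^sub>2) \<equiv> m\<^sub>2\<close> modulo \<open>x\<close>.\<close>

lemma ideal_b1_plus_Xp_mult:
  assumes hmu: "homog d \<mu>" and dn: "n \<le> d"
  obtains B \<nu> where "B \<in> ideal_b1" "homog (d - 1) \<nu>" "\<mu> = B + Xp * \<nu>"
proof -
  have "\<forall>k\<in>keys (xfree \<mu>). n \<le> lookup k VY + lookup k VZ"
  proof
    fix k assume "k \<in> keys (xfree \<mu>)"
    then have "lookup k VX = 0" "k \<in> keys \<mu>" unfolding xfree_def using keys_mfilter by blast+
    then have "mdeg k = d" "lookup k VX = 0" using hmu by (auto simp: homog_def)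
    then show "n \<le> lookup k VY + lookup k VZ" using dn by (simp add: mdeg_def)
  qed
  then obtain s where s: "xfree \<mu> = (\<Sum>i\<le>n. mon (yzmon n i) * s i)" using yz_degree_ge_decomp by blast
  obtain G where G: "\<mu> = xfree \<mu> + Xp * G" using xfree_decomp by blast
  define w where "w i = act (mon (yzmon n i)) \<Phi>" for i
  define B where "B = (\<Sum>i\<le>n. b1 n \<Phi> (Inr (yzmon n i)) * hcomp (d - n) (s i))"
  define \<nu> where "\<nu> = hcomp (d - 1) (G + (\<Sum>i\<le>n. Pinv (w i) * s i))"
  have "B \<in> ideal_b1" unfolding B_def
    by (intro ideal_b1_sum ideal_b1_gen) (auto simp: Bidx_def yzmon_in_M0)
  have "(\<Sum>i\<le>n. b1 n \<Phi> (Inr (yzmon n i)) * s i) = xfree \<mu> - Xp * (\<Sum>i\<le>n. Pinv (w i) * s i)"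
    unfolding s by (simp add: w_def sum_subtractf sum_distrib_left algebra_simps)
  then have diff: "\<mu> - (\<Sum>i\<le>n. b1 n \<Phi> (Inr (yzmon n i)) * s i) = Xp * (G + (\<Sum>i\<le>n. Pinv (w i) * s i))"
    using G by (simp add: algebra_simps)
  have "hcomp d (b1 n \<Phi> (Inr (yzmon n i)) * s i) = b1 n \<Phi> (Inr (yzmon n i)) * hcomp (d - n) (s i)"
    if "i \<le> n" for i
    using hcomp_homog_mult[OF homog_b1, of "Inr (yzmon n i)" d "s i"] that dn
    by (simp add: Bidx_def yzmon_in_M0)
  then have "hcomp d (\<Sum>i\<le>n. b1 n \<Phi> (Inr (yzmon n i)) * s i) = B"
    unfolding B_def hcomp_sum[OF finite_atMost] by simp
  then have "\<mu> - B = hcomp d (\<mu> - (\<Sum>i\<le>n. b1 n \<Phi> (Inr (yzmon n i)) * s i))"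
    using hcomp_homog[OF hmu] by (simp add: hcomp_diff)
  also have "\<dots> = Xp * \<nu>"
    unfolding diff \<nu>_def using dn n_pos by (simp add: hcomp_homog_mult[OF homog_Xp])
  finally have "\<mu> = B + Xp * \<nu>" by (simp add: algebra_simps)
  moreover have "homog (d - 1) \<nu>" unfolding \<nu>_def by (rule homog_hcomp)
  ultimately show thesis using \<open>B \<in> ideal_b1\<close> that by blast
qed

text \<open>If \<open>x \<nu> \<in> I\<close>, then \<open>\<nu>(\<phi>)\<close> is killed by \<open>x\<close> and hence a combination of duals \<open>s\<^sup>*\<close> of
  monomials \<open>s\<close> in \<open>y, z\<close> of degree \<open>e = 2n - 1 - d\<close>.  Padding \<open>s\<close> by \<open>T = y\<^sup>n\<^sup>-\<^sup>1\<^sup>-\<^sup>e\<close> gives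
  \<open>s\<^sup>* = T(p\<^sup>-\<^sup>1((T s)\<^sup>*)(\<phi>))\<close>, and \<open>x T p\<^sup>-\<^sup>1((T s)\<^sup>*) = T b\<^sub>1((T s)\<^sup>*)\<close>; for \<open>d > 2n - 1\<close>
  the sum is empty.\<close>

lemma Xp_mult_annihilator_correction:
  assumes hnu: "homog (d - 1) \<nu>" and I: "act (Xp * \<nu>) xPhi = (\<lambda>_. 0)" and dn: "n \<le> d"
  obtains Q where "Xp * Q \<in> ideal_b1" "homog (d - 1) Q" "act Q xPhi = act \<nu> xPhi"
proof (cases "2 * n - 1 < d")
  case True
  then have "2 * n - 2 < d - 1" using n_pos by arith
  then have "act \<nu> xPhi = (\<lambda>_. 0)" by (rule act_Dsp(2)[OF hnu xPhi_Dsp])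
  then show thesis using that[of 0] ideal_b1_zero by simp
next
  case False
  define e where "e = 2 * n - 1 - d"
  define \<theta> where "\<theta> = act \<nu> xPhi"
  have thD: "\<theta> \<in> Dsp e"
    unfolding \<theta>_def e_def using act_Dsp(1)[OF hnu xPhi_Dsp] False dn n_pos
    by (simp add: numeral_2_eq_2 One_nat_def)
  have thX: "act Xp \<theta> = (\<lambda>_. 0)" unfolding \<theta>_def using I by (simp add: act_mult)
  have en: "e \<le> n - 1" unfolding e_def using dn by simp
  define T where "T = ymon (n - 1 - e)"
  have TM: "T + s \<in> M0 (n - 1)" if "s \<in> M0 e" for s
    using that en by (simp add: M0_def T_def lookup_add)
  define Q where "Q = (\<Sum>s\<in>M0 e. cst (\<theta> s) * (mon T * Pinv (dual (T + s))))"
  have act_summand: "act (mon T * Pinv (dual (T + s))) xPhi = dual s" if "s \<in> M0 e" for s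
    using act_pinv[OF dual_Dsp_M0[OF TM[OF that]]] by (simp add: act_mult act_mon_dual_add)
  have "act Q xPhi = (\<lambda>v. \<Sum>s\<in>M0 e. \<theta> s * dual s v)"
    unfolding Q_def by (simp add: act_sum act_cst_mult act_summand)
  also have "\<dots> = \<theta>" using dual_expand[OF thD thX] by simp
  finally have "act Q xPhi = act \<nu> xPhi" by (simp add: \<theta>_def)
  moreover have "homog (d - 1) Q"
    unfolding Q_def
  proof (intro homog_sum homog_cst_mult)
    fix s assume "s \<in> M0 e"
    have "homog (mdeg T + (n - 1)) (mon T * Pinv (dual (T + s)))"
      by (rule homog_mult[OF homog_mon pinv_homog[OF dual_Dsp_M0[OF TM[OF \<open>s \<in> M0 e\<close>]]]])
    moreover have "mdeg T + (n - 1) = d - 1" using False dn en by (simp add: T_def e_def)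
    ultimately show "homog (d - 1) (mon T * Pinv (dual (T + s)))" by simp
  qed simp
  moreover have "Xp * Q \<in> ideal_b1"
  proof -
    have "Xp * Q = (\<Sum>s\<in>M0 e. b1 n \<Phi> (Inl (T + s)) * (cst (\<theta> s) * mon T))"
      unfolding Q_def by (simp add: sum_distrib_left algebra_simps)
    also have "\<dots> \<in> ideal_b1"
      using TM by (intro ideal_b1_sum ideal_b1_gen) (auto simp: Bidx_def)
    finally show ?thesis .
  qed
  ultimately show thesis using that by blast
qed

lemma homog_annihilator_in_ideal_b1:
  assumes "homog d \<mu>" "act \<mu> xPhi = (\<lambda>_. 0)"
  shows "\<mu> \<in> ideal_b1"
  using assms
proof (induction d arbitrary: \<mu> rule: less_induct)
  case (less d)
  show ?case
  proof (cases "d < n")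
    case True
    then show ?thesis using annihilator_low_degree less.prems ideal_b1_zero by blast
  next
    case False
    then have dn: "n \<le> d" by simp
    then obtain B \<nu> where B: "B \<in> ideal_b1" and hnu: "homog (d - 1) \<nu>" and mu: "\<mu> = B + Xp * \<nu>"
      using ideal_b1_plus_Xp_mult[OF less.prems(1)] by blast
    have "act (Xp * \<nu>) xPhi = (\<lambda>_. 0)"
      using less.prems(2) act_ideal_b1_xPhi[OF B] by (simp add: mu act_add)
    then obtain Q where Q: "Xp * Q \<in> ideal_b1" "homog (d - 1) Q" "act Q xPhi = act \<nu> xPhi"
      using Xp_mult_annihilator_correction[OF hnu _ dn] by blast
    have "\<nu> - Q \<in> ideal_b1"
      using less.IH[of "d - 1" "\<nu> - Q"] False n_pos hnu Q(2,3) by (simp add: homog_diff act_diff)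
    then have "B + Xp * (\<nu> - Q) + Xp * Q \<in> ideal_b1"
      using B Q(1) by (intro ideal_b1_add ideal_b1_mult[of "\<nu> - Q"])
    then show ?thesis by (simp add: mu algebra_simps)
  qed
qed

lemma annihilator_in_ideal_b1:
  assumes "act \<mu> xPhi = (\<lambda>_. 0)"
  shows "\<mu> \<in> ideal_b1"
proof -
  obtain N where N: "\<forall>m\<in>keys \<mu>. mdeg m \<le> N" using mdeg_keys_bounded by blast
  have "\<mu> = (\<Sum>d\<le>N. hcomp d \<mu>)" using N by (intro hcomp_decomp) auto
  moreover have "(\<Sum>d\<le>N. hcomp d \<mu>) \<in> ideal_b1"
  proof (rule ideal_b1_sum)
    fix d show "hcomp d \<mu> \<in> ideal_b1" by (rule homog_annihilator_in_ideal_b1[OF homog_hcomp act_hcomp_xPhi[OF assms]])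
  qed simp
  ultimately show ?thesis by simp
qed

lemma image_beta1_eq_Iid: "beta1 n \<Phi> ` Fmod n = Iid \<Phi>"
proof
  show "beta1 n \<Phi> ` Fmod n \<subseteq> Iid \<Phi>" using act_beta1_xPhi by (auto simp: Iid_def)
  show "Iid \<Phi> \<subseteq> beta1 n \<Phi> ` Fmod n" using annihilator_in_ideal_b1 by (auto simp: Iid_def ideal_b1_def)
qed

subsection \<open>Exactness at \<open>B\<^sub>1\<close> and \<open>B\<^sub>2\<close>\<close>

lemma atMost_pred_eq_lessThan: "{..n - 1} = {..<n}" using n_pos by auto

lemma sum_M0_pred: "(\<Sum>m\<in>M0 (n - 1). f m) = (\<Sum>j<n. f (yzmon (n - 1) j))"
  by (simp add: sum_M0_yzmon atMost_pred_eq_lessThan)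

lemma Zp_mult_yzmon_pred: "j < n \<Longrightarrow> Zp * mon (yzmon (n - 1) j) = mon (yzmon n (Suc j))"
proof -
  assume "j < n"
  then have "j \<le> n - 1" by arith
  then show ?thesis using Zp_mult_yzmon[of j "n - 1"] n_pos by (simp add: Suc_diff_1)
qed

lemma Yp_mult_yzmon_pred: "j < n \<Longrightarrow> Yp * mon (yzmon (n - 1) j) = mon (yzmon n j)"
proof -
  assume "j < n"
  then have "j \<le> n - 1" by arith
  then show ?thesis using Yp_mult_yzmon[of j "n - 1"] n_pos by (simp add: Suc_diff_1)
qed

lemma lookup_mon_yzmon: "i \<le> n \<Longrightarrow> k \<le> n \<Longrightarrow> lookup (mon (yzmon n k) :: 'k mpoly3) (yzmon n i) = (if i = k then 1 else 0)"
  using yzmon_inj[of i n k] by (auto simp: lookup_mon)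

lemma xfree_form_mult: "xfree ((Xp * cst A + Yp * cst B - Zp * cst C) * G) = (Yp * cst B - Zp * cst C) * xfree G"
proof -
  have "(Xp * cst A + Yp * cst B - Zp * cst C) * G = Xp * (cst A * G) + Yp * (cst B * G) - Zp * (cst C * G)"
    by (simp add: algebra_simps)
  then have "xfree ((Xp * cst A + Yp * cst B - Zp * cst C) * G) = Yp * (cst B * xfree G) - Zp * (cst C * xfree G)"
    by (simp only: xfree_add xfree_diff xfree_Xp_mult xfree_Yp_mult xfree_Zp_mult xfree_cst_mult add_0_left)
  then show ?thesis by (simp add: algebra_simps)
qed

lemma xfree_form_mult_neg: "xfree ((Xp * cst A - Yp * cst B + Zp * cst C) * G) = (- (Yp * cst B) + Zp * cst C) * xfree G"
proof -
  have "(Xp * cst A - Yp * cst B + Zp * cst C) * G = Xp * (cst A * G) - Yp * (cst B * G) + Zp * (cst C * G)"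
    by (simp add: algebra_simps)
  then have "xfree ((Xp * cst A - Yp * cst B + Zp * cst C) * G) = 0 - Yp * (cst B * xfree G) + Zp * (cst C * xfree G)"
    by (simp only: xfree_add xfree_diff xfree_Xp_mult xfree_Yp_mult xfree_Zp_mult xfree_cst_mult)
  then show ?thesis by (simp add: algebra_simps)
qed

lemma xfree_b2_Inr_Inl:
  assumes "i \<le> n" "j < n"
  shows "xfree (b2 n \<Phi> (Inr (yzmon n i)) (Inl (yzmon (n - 1) j)) * G) = (Yp * cst (if i = Suc j then 1 else 0) - Zp * cst (if i = j then 1 else 0)) * xfree G"
proof -
  have e1: "lookup (Zp * mon (yzmon (n - 1) j) :: 'k mpoly3) (yzmon n i) = (if i = Suc j then 1 else 0)"
    using assms by (simp add: Zp_mult_yzmon_pred lookup_mon_yzmon)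
  have e2: "lookup (Yp * mon (yzmon (n - 1) j) :: 'k mpoly3) (yzmon n i) = (if i = j then 1 else 0)"
    using assms by (simp add: Yp_mult_yzmon_pred lookup_mon_yzmon)
  show ?thesis by (simp only: b2.simps e1 e2 xfree_form_mult)
qed

lemma xfree_b2_Inl_Inr:
  assumes "i \<le> n" "j < n"
  shows "xfree (b2 n \<Phi> (Inl (yzmon (n - 1) j)) (Inr (yzmon n i)) * G) = (- (Yp * cst (if i = Suc j then 1 else 0)) + Zp * cst (if i = j then 1 else 0)) * xfree G"
proof -
  have e1: "act Zp (dual (yzmon n i)) (yzmon (n - 1) j) = (if i = Suc j then (1::'k) else 0)"
    using assms by (simp add: act_dual_eq_lookup mult.commute[of "mon _"] Zp_mult_yzmon_pred lookup_mon_yzmon)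
  have e2: "act Yp (dual (yzmon n i)) (yzmon (n - 1) j) = (if i = j then (1::'k) else 0)"
    using assms by (simp add: act_dual_eq_lookup mult.commute[of "mon _"] Yp_mult_yzmon_pred lookup_mon_yzmon)
  show ?thesis by (simp only: b2.simps e1 e2 xfree_form_mult_neg)
qed

lemma xfree_b2_same_side:
  shows "xfree (b2 n \<Phi> (Inl m1) (Inl m) * G) = 0" and "xfree (b2 n \<Phi> (Inr m1) (Inr m) * G) = 0"
  by (simp_all only: b2.simps mult.assoc xfree_Xp_mult)

lemma xfree_beta1: "xfree (beta1 n \<Phi> f) = (\<Sum>i\<le>n. mon (yzmon n i) * xfree (f (Inr (yzmon n i))))"
proof -
  have "xfree (beta1 n \<Phi> f) = (\<Sum>m\<in>M0 (n - 1). xfree (b1 n \<Phi> (Inl m) * f (Inl m))) + (\<Sum>m\<in>M0 n. xfree (b1 n \<Phi> (Inr m) * f (Inr m)))"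
    by (simp add: beta1_def sum_Bidx xfree_add xfree_sum)
  also have "(\<Sum>m\<in>M0 (n - 1). xfree (b1 n \<Phi> (Inl m) * f (Inl m))) = 0"
    by (simp add: mult.assoc xfree_Xp_mult)
  also have "(\<Sum>m\<in>M0 n. xfree (b1 n \<Phi> (Inr m) * f (Inr m))) = (\<Sum>m\<in>M0 n. mon m * xfree (f (Inr m)))"
  proof (intro sum.cong refl)
    fix m assume "m \<in> M0 n"
    then have "lookup m VX = 0" by (rule lookup_VX_M0)
    then show "xfree (b1 n \<Phi> (Inr m) * f (Inr m)) = mon m * xfree (f (Inr m))"
      by (simp add: left_diff_distrib xfree_diff mult.assoc xfree_Xp_mult xfree_mon_mult)
  qed
  finally show ?thesis by (simp add: sum_M0_yzmon)
qed

lemma Bidx_cases: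
  assumes "k \<in> Bidx n"
  obtains (L) j where "j < n" "k = Inl (yzmon (n - 1) j)" | (R) i where "i \<le> n" "k = Inr (yzmon n i)"
proof -
  from assms consider (L) m where "m \<in> M0 (n - 1)" "k = Inl m" | (R) m where "m \<in> M0 n" "k = Inr m"
    unfolding Bidx_def by blast
  then show ?thesis
  proof cases
    case L
    have e: "m = yzmon (n - 1) (lookup m VZ)" and l: "lookup m VZ \<le> n - 1" using M0_yzmon_lookup[OF L(1)] by auto
    have "lookup m VZ < n" using l n_pos by arith
    moreover have "k = Inl (yzmon (n - 1) (lookup m VZ))" using L(2) e by simp
    ultimately show ?thesis by (rule that(1))
  next
    case R
    have e: "m = yzmon n (lookup m VZ)" and l: "lookup m VZ \<le> n" using M0_yzmon_lookup[OF R(1)] by auto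
    have "k = Inr (yzmon n (lookup m VZ))" using R(2) e by simp
    with l show ?thesis by (rule that(2))
  qed
qed

lemma Inl_yzmon_Bidx: "j < n \<Longrightarrow> Inl (yzmon (n - 1) j) \<in> Bidx n"
  by (simp add: Bidx_def yzmon_in_M0)

lemma Inr_yzmon_Bidx: "i \<le> n \<Longrightarrow> Inr (yzmon n i) \<in> Bidx n"
  by (simp add: Bidx_def yzmon_in_M0)

lemma Fmod_Xp_divide:
  fixes f :: "bidx \<Rightarrow> 'k mpoly3"
  assumes "f \<in> Fmod n" "\<forall>k. homog D (f k)" "\<forall>k\<in>Bidx n. xfree (f k) = 0"
  obtains g where "g \<in> Fmod n" "\<forall>k. homog (D - 1) (g k)" "D = 0 \<longrightarrow> (\<forall>k. g k = 0)"
    and "f = (\<lambda>k. Xp * g k)"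
proof -
  have "\<forall>k. \<exists>q. f k = Xp * q"
  proof
    fix k
    show "\<exists>q. f k = Xp * q"
      using assms(1,3) xfree_eq_0_iff[of "f k"] by (cases "k \<in> Bidx n") (auto simp: Fmod_def)
  qed
  then obtain q where q: "\<forall>k. f k = Xp * q k" by (rule choice[THEN exE])
  define g where "g k = hcomp_pred D (q k)" for k
  have fg: "f k = Xp * g k" for k
  proof -
    have "f k = hcomp D (f k)" using assms(2) by (simp add: hcomp_homog)
    also have "\<dots> = Xp * g k" using q by (simp add: g_def hcomp_linear_mult homog_Xp)
    finally show ?thesis .
  qed
  have "g k = 0" if "k \<notin> Bidx n" for k
    using assms(1) that fg[of k] Xp_neq_0[where 'k='k] by (simp add: Fmod_def)
  then have "g \<in> Fmod n" by (simp add: Fmod_def)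
  moreover have "\<forall>k. homog (D - 1) (g k)" by (simp add: g_def homog_hcomp_pred)
  moreover have "D = 0 \<longrightarrow> (\<forall>k. g k = 0)" by (simp add: g_def hcomp_pred_def)
  moreover have "f = (\<lambda>k. Xp * g k)" by (simp add: fun_eq_iff fg)
  ultimately show thesis using that by blast
qed

lemma act_b1_Inl_mult_Phi: "m \<in> M0 (n - 1) \<Longrightarrow> act (b1 n \<Phi> (Inl m) * F) \<Phi> = act F (dual m)"
proof -
  assume m: "m \<in> M0 (n - 1)"
  have "dual m \<in> Dsp (n - 1)" using dual_Dsp[of m] mdeg_M0[OF m] by simp
  then have pd: "act (Pinv (dual m)) xPhi = dual m" by (rule act_pinv)
  have "act (b1 n \<Phi> (Inl m) * F) \<Phi> = act F (act (Pinv (dual m)) (act Xp \<Phi>))"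
    by (simp add: act_mult_rev mult.commute[of F])
  then show ?thesis using pd by simp
qed

lemma act_b1_Inr_mult_Xp_Phi: "m \<in> M0 n \<Longrightarrow> act (b1 n \<Phi> (Inr m) * (Xp * q)) \<Phi> = (\<lambda>_. 0)"
proof -
  assume m: "m \<in> M0 n"
  have "b1 n \<Phi> (Inr m) * (Xp * q) = Xp * b1 n \<Phi> (Inr m) * q" by (simp add: algebra_simps)
  then have "act (b1 n \<Phi> (Inr m) * (Xp * q)) \<Phi> = act q (act (b1 n \<Phi> (Inr m)) xPhi)"
    by (simp only: act_mult_rev)
  also have "act (b1 n \<Phi> (Inr m)) xPhi = (\<lambda>_. 0)" by (rule act_b1_xPhi) (simp add: Bidx_def m)
  finally show ?thesis by simp
qed

lemma xfree_beta2_Inr: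
  assumes i: "i \<le> n"
  shows "xfree (beta2 n \<Phi> w (Inr (yzmon n i)))
       = hilbert_burch n (\<lambda>j. xfree (w (Inl (yzmon (n - 1) j)))) i"
proof -
  have "xfree (beta2 n \<Phi> w (Inr (yzmon n i)))
      = (\<Sum>j<n. xfree (b2 n \<Phi> (Inr (yzmon n i)) (Inl (yzmon (n - 1) j)) * w (Inl (yzmon (n - 1) j))))
        + (\<Sum>m\<in>M0 n. xfree (b2 n \<Phi> (Inr (yzmon n i)) (Inr m) * w (Inr m)))"
    using Inr_yzmon_Bidx[OF i] by (simp add: beta2_def sum_Bidx xfree_add xfree_sum sum_M0_pred)
  also have "(\<Sum>m\<in>M0 n. xfree (b2 n \<Phi> (Inr (yzmon n i)) (Inr m) * w (Inr m))) = 0"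
    by (simp only: xfree_b2_same_side sum.neutral_const)
  also have "(\<Sum>j<n. xfree (b2 n \<Phi> (Inr (yzmon n i)) (Inl (yzmon (n - 1) j)) * w (Inl (yzmon (n - 1) j))))
      = (\<Sum>j<n. (Yp * cst (if i = Suc j then 1 else 0) - Zp * cst (if i = j then 1 else 0))
                  * xfree (w (Inl (yzmon (n - 1) j))))"
  proof (intro sum.cong refl)
    fix j assume "j \<in> {..<n}"
    then show "xfree (b2 n \<Phi> (Inr (yzmon n i)) (Inl (yzmon (n - 1) j)) * w (Inl (yzmon (n - 1) j)))
        = (Yp * cst (if i = Suc j then 1 else 0) - Zp * cst (if i = j then 1 else 0))
          * xfree (w (Inl (yzmon (n - 1) j)))"
      using i by (simp only: lessThan_iff xfree_b2_Inr_Inl)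
  qed
  also have "\<dots> = hilbert_burch n (\<lambda>j. xfree (w (Inl (yzmon (n - 1) j)))) i"
    by (rule sum_hilbert_burch[OF i])
  finally show ?thesis by simp
qed

lemma xfree_beta2_Inl:
  assumes j: "j < n"
  shows "xfree (beta2 n \<Phi> w (Inl (yzmon (n - 1) j)))
       = Zp * xfree (w (Inr (yzmon n j))) - Yp * xfree (w (Inr (yzmon n (Suc j))))"
proof -
  have "xfree (beta2 n \<Phi> w (Inl (yzmon (n - 1) j)))
      = (\<Sum>m\<in>M0 (n - 1). xfree (b2 n \<Phi> (Inl (yzmon (n - 1) j)) (Inl m) * w (Inl m)))
        + (\<Sum>i\<le>n. xfree (b2 n \<Phi> (Inl (yzmon (n - 1) j)) (Inr (yzmon n i)) * w (Inr (yzmon n i))))"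
    using Inl_yzmon_Bidx[OF j] by (simp add: beta2_def sum_Bidx xfree_add xfree_sum sum_M0_yzmon)
  also have "(\<Sum>m\<in>M0 (n - 1). xfree (b2 n \<Phi> (Inl (yzmon (n - 1) j)) (Inl m) * w (Inl m))) = 0"
    by (simp only: xfree_b2_same_side sum.neutral_const)
  also have "(\<Sum>i\<le>n. xfree (b2 n \<Phi> (Inl (yzmon (n - 1) j)) (Inr (yzmon n i)) * w (Inr (yzmon n i))))
      = (\<Sum>i\<le>n. (- (Yp * cst (if i = Suc j then 1 else 0)) + Zp * cst (if i = j then 1 else 0))
                  * xfree (w (Inr (yzmon n i))))"
  proof (intro sum.cong refl)
    fix i assume "i \<in> {..n}"
    then show "xfree (b2 n \<Phi> (Inl (yzmon (n - 1) j)) (Inr (yzmon n i)) * w (Inr (yzmon n i)))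
        = (- (Yp * cst (if i = Suc j then 1 else 0)) + Zp * cst (if i = j then 1 else 0))
          * xfree (w (Inr (yzmon n i)))"
      using j by (simp only: atMost_iff xfree_b2_Inl_Inr)
  qed
  also have "\<dots> = Zp * xfree (w (Inr (yzmon n j))) - Yp * xfree (w (Inr (yzmon n (Suc j))))"
    by (rule sum_hilbert_burch_transpose[OF j])
  finally show ?thesis by simp
qed

lemma act_beta1_Phi:
  assumes "\<forall>m\<in>M0 n. xfree (f (Inr m)) = 0"
  shows "act (beta1 n \<Phi> f) \<Phi> = (\<lambda>v. \<Sum>j<n. act (f (Inl (yzmon (n - 1) j))) (dual (yzmon (n - 1) j)) v)"
proof
  fix v
  have "act (beta1 n \<Phi> f) \<Phi> v = (\<Sum>m\<in>M0 (n - 1). act (b1 n \<Phi> (Inl m) * f (Inl m)) \<Phi> v)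
      + (\<Sum>m\<in>M0 n. act (b1 n \<Phi> (Inr m) * f (Inr m)) \<Phi> v)"
    by (simp add: beta1_def sum_Bidx act_add act_sum)
  also have "(\<Sum>m\<in>M0 n. act (b1 n \<Phi> (Inr m) * f (Inr m)) \<Phi> v) = 0"
  proof (intro sum.neutral ballI)
    fix m assume m: "m \<in> M0 n"
    obtain q where "f (Inr m) = Xp * q" using assms m xfree_eq_0_iff by blast
    then show "act (b1 n \<Phi> (Inr m) * f (Inr m)) \<Phi> v = 0" using act_b1_Inr_mult_Xp_Phi[OF m] by simp
  qed
  also have "(\<Sum>m\<in>M0 (n - 1). act (b1 n \<Phi> (Inl m) * f (Inl m)) \<Phi> v)
      = (\<Sum>m\<in>M0 (n - 1). act (f (Inl m)) (dual m) v)"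
    by (intro sum.cong refl) (simp only: act_b1_Inl_mult_Phi)
  finally show "act (beta1 n \<Phi> f) \<Phi> v = (\<Sum>j<n. act (f (Inl (yzmon (n - 1) j))) (dual (yzmon (n - 1) j)) v)"
    by (simp add: sum_M0_pred)
qed

text \<open>Modulo \<open>x\<close>, \<open>b\<^sub>1\<close> is the row of monomials of degree \<open>n\<close> in \<open>y, z\<close>, so a cycle can be
  corrected by a boundary until its \<open>B\<^sub>1\<close>-components of the second kind are divisible by \<open>x\<close>.\<close>

lemma ker_beta1_reduce_Inr:
  assumes fh: "\<forall>k. homog D (f k)" and fb: "beta1 n \<Phi> f = 0"
  obtains w where "w \<in> Fmod n" "\<forall>k. homog (D - 1) (w k)" "D = 0 \<longrightarrow> (\<forall>k. w k = 0)"
    and "\<forall>i\<le>n. xfree (f (Inr (yzmon n i))) = xfree (beta2 n \<Phi> w (Inr (yzmon n i)))"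
proof -
  define a where "a i = xfree (f (Inr (yzmon n i)))" for i
  have "(\<Sum>i\<le>n. mon (yzmon n i) * a i) = 0" using xfree_beta1[of f] fb by (simp add: a_def)
  moreover have "\<forall>i\<le>n. homog D (a i)" using fh by (simp add: a_def homog_xfree)
  moreover have "\<forall>i\<le>n. xfree (a i) = a i" by (simp add: a_def xfree_idem)
  ultimately obtain g where g: "\<forall>j. homog (D - 1) (g j) \<and> xfree (g j) = g j \<and> (D = 0 \<longrightarrow> g j = 0)"
    and ag: "\<forall>i\<le>n. a i = hilbert_burch n g i"
    using yzmon_syzygy_homog by blast
  define w :: "bidx \<Rightarrow> 'k mpoly3" where
    "w k = (case k of Inl m \<Rightarrow> if m \<in> M0 (n - 1) then g (lookup m VZ) else 0 | Inr m \<Rightarrow> 0)" for k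
  have "xfree (w (Inl (yzmon (n - 1) j))) = g j" if "j < n" for j
    using that g by (simp add: w_def yzmon_in_M0 less_Suc_eq_le[symmetric] n_pos)
  then have "xfree (beta2 n \<Phi> w (Inr (yzmon n i))) = a i" if "i \<le> n" for i
    using that ag by (simp add: xfree_beta2_Inr hilbert_burch_def)
  moreover have "w \<in> Fmod n" by (auto simp: Fmod_def w_def Bidx_def split: sum.splits)
  moreover have "\<forall>k. homog (D - 1) (w k)" "D = 0 \<longrightarrow> (\<forall>k. w k = 0)"
    using g by (auto simp: w_def split: sum.splits)
  ultimately show thesis using that by (simp add: a_def)
qed

text \<open>Once the components of the second kind are divisible by \<open>x\<close>, contracting with \<open>\<Phi>\<close>
  turns \<open>b\<^sub>1 f = 0\<close> into a relation among the duals of the monomials of degree \<open>n - 1\<close>,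
  whose solutions modulo \<open>x\<close> are the boundaries of the second kind.\<close>

lemma ker_beta1_reduce_Inl:
  assumes fh: "\<forall>k. homog D (f k)" and fb: "beta1 n \<Phi> f = 0"
    and fR: "\<forall>i\<le>n. xfree (f (Inr (yzmon n i))) = 0"
  obtains w where "w \<in> Fmod n" "\<forall>k. homog (D - 1) (w k)" "D = 0 \<longrightarrow> (\<forall>k. w k = 0)"
    and "\<forall>k\<in>Bidx n. xfree (f k) = xfree (beta2 n \<Phi> w k)"
proof -
  define h where "h j = f (Inl (yzmon (n - 1) j))" for j
  have "\<forall>m\<in>M0 n. xfree (f (Inr m)) = 0" using fR M0_yzmon_lookup by metis
  from act_beta1_Phi[OF this] have "(\<lambda>v. \<Sum>j<n. act (h j) (dual (yzmon (n - 1) j)) v) = (\<lambda>_. 0)"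
    using fb by (simp add: h_def)
  moreover have "\<forall>j<n. homog D (h j)" using fh by (simp add: h_def)
  ultimately obtain u where u: "\<forall>i. homog (D - 1) (u i) \<and> xfree (u i) = u i \<and> (D = 0 \<longrightarrow> u i = 0)"
    and hu: "\<forall>j<n. xfree (h j) = Zp * u j - Yp * u (Suc j)"
    using contraction_syzygy_homog by blast
  define w :: "bidx \<Rightarrow> 'k mpoly3" where
    "w k = (case k of Inl m \<Rightarrow> 0 | Inr m \<Rightarrow> if m \<in> M0 n then u (lookup m VZ) else 0)" for k
  have "xfree (f k) = xfree (beta2 n \<Phi> w k)" if k: "k \<in> Bidx n" for k
    using k
  proof (cases rule: Bidx_cases)
    case (L j)
    then show ?thesis using hu u by (simp add: xfree_beta2_Inl w_def yzmon_in_M0 h_def)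
  next
    case (R i)
    then show ?thesis using fR by (simp add: xfree_beta2_Inr w_def hilbert_burch_def)
  qed
  moreover have "w \<in> Fmod n" by (auto simp: Fmod_def w_def Bidx_def split: sum.splits)
  moreover have "\<forall>k. homog (D - 1) (w k)" "D = 0 \<longrightarrow> (\<forall>k. w k = 0)"
    using u by (auto simp: w_def split: sum.splits)
  ultimately show thesis using that by blast
qed

lemma ker_beta1_diff_beta2:
  assumes "f \<in> Fmod n" "\<forall>k. homog D (f k)" "beta1 n \<Phi> f = 0"
    and "\<forall>k. homog (D - 1) (w k)" "D = 0 \<longrightarrow> (\<forall>k. w k = 0)"
  shows "(\<lambda>k. f k - beta2 n \<Phi> w k) \<in> Fmod n" "\<forall>k. homog D (f k - beta2 n \<Phi> w k)"
    and "beta1 n \<Phi> (\<lambda>k. f k - beta2 n \<Phi> w k) = 0"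
  using assms homog_beta2[of D w]
  by (simp_all add: Fmod_diff beta2_Fmod homog_diff beta1_diff beta1_beta2_zero)

lemma ker_beta1_homog:
  assumes "f \<in> Fmod n" "\<forall>k. homog D (f k)" "beta1 n \<Phi> f = 0"
  shows "\<exists>w\<in>Fmod n. f = beta2 n \<Phi> w"
  using assms
proof (induction D arbitrary: f rule: less_induct)
  case (less D)
  obtain w1 where w1: "w1 \<in> Fmod n" "\<forall>k. homog (D - 1) (w1 k)" "D = 0 \<longrightarrow> (\<forall>k. w1 k = 0)"
    and w1R: "\<forall>i\<le>n. xfree (f (Inr (yzmon n i))) = xfree (beta2 n \<Phi> w1 (Inr (yzmon n i)))"
    using ker_beta1_reduce_Inr[OF less.prems(2,3)] by blast
  define f1 where "f1 k = f k - beta2 n \<Phi> w1 k" for k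
  have f1: "f1 \<in> Fmod n" "\<forall>k. homog D (f1 k)" "beta1 n \<Phi> f1 = 0"
    unfolding f1_def[abs_def] using ker_beta1_diff_beta2[OF less.prems w1(2,3)] by blast+
  have "\<forall>i\<le>n. xfree (f1 (Inr (yzmon n i))) = 0" using w1R by (simp add: f1_def xfree_diff)
  then obtain w2 where w2: "w2 \<in> Fmod n" "\<forall>k. homog (D - 1) (w2 k)" "D = 0 \<longrightarrow> (\<forall>k. w2 k = 0)"
    and w2X: "\<forall>k\<in>Bidx n. xfree (f1 k) = xfree (beta2 n \<Phi> w2 k)"
    using ker_beta1_reduce_Inl[OF f1(2,3)] by blast
  define f2 where "f2 k = f1 k - beta2 n \<Phi> w2 k" for k
  have f2: "f2 \<in> Fmod n" "\<forall>k. homog D (f2 k)" "beta1 n \<Phi> f2 = 0"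
    unfolding f2_def[abs_def] using ker_beta1_diff_beta2[OF f1 w2(2,3)] by blast+
  have "\<forall>k\<in>Bidx n. xfree (f2 k) = 0" using w2X by (simp add: f2_def xfree_diff)
  then obtain f3 where f3: "f3 \<in> Fmod n" "\<forall>k. homog (D - 1) (f3 k)" "D = 0 \<longrightarrow> (\<forall>k. f3 k = 0)"
    and f23: "f2 = (\<lambda>k. Xp * f3 k)"
    using Fmod_Xp_divide[OF f2(1,2)] by blast
  have f_eq: "f = (\<lambda>k. beta2 n \<Phi> (\<lambda>k. w1 k + w2 k) k + Xp * f3 k)"
    using f23 by (auto simp: fun_eq_iff f1_def f2_def beta2_add algebra_simps)
  show ?case
  proof (cases "D = 0")
    case True
    then show ?thesis using f_eq f3(3) Fmod_add[OF w1(1) w2(1)] by auto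
  next
    case False
    have "Xp * beta1 n \<Phi> f3 = 0" using f2(3) f23 by (simp add: beta1_scale[symmetric])
    then obtain w3 where "w3 \<in> Fmod n" "f3 = beta2 n \<Phi> w3"
      using less.IH[of "D - 1" f3] False f3(1,2) Xp_neq_0[where 'k='k] by auto
    then show ?thesis
      using f_eq Fmod_add[OF Fmod_add[OF w1(1) w2(1)] Fmod_scale]
      by (intro bexI[of _ "\<lambda>k. w1 k + w2 k + Xp * w3 k"]) (auto simp: beta2_add beta2_scale)
  qed
qed

lemma xfree_b1_Inr: "m \<in> M0 n \<Longrightarrow> xfree (b1 n \<Phi> (Inr m)) = mon m"
proof -
  assume m: "m \<in> M0 n"
  have "xfree (mon m :: 'k mpoly3) = xfree (mon m * 1)" by simp
  also have "\<dots> = mon m" using xfree_mon_mult[of m "1 :: 'k mpoly3"] xfree_cst[of "1::'k"] lookup_VX_M0[OF m] by simp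
  finally have "xfree (mon m :: 'k mpoly3) = mon m" .
  then show ?thesis by (simp add: xfree_diff xfree_Xp_mult)
qed

lemma b1_Inr_neq_0: "m \<in> M0 n \<Longrightarrow> b1 n \<Phi> (Inr m) \<noteq> 0"
  using xfree_b1_Inr mon_neq_0[of m, where 'k='k] by force

text \<open>Modulo \<open>x\<close>, \<open>b\<^sub>2\<close> is the Hilbert--Burch matrix of the monomials of degree \<open>n\<close> in \<open>y, z\<close>
  and its negative transpose, so a cycle of \<open>b\<^sub>2\<close> agrees modulo \<open>x\<close> with a multiple of
  \<open>b\<^sub>3(1)\<close>.\<close>

lemma ker_beta2_reduce:
  assumes fh: "\<forall>k. homog D (f k)" and fb: "beta2 n \<Phi> f = (\<lambda>_. 0)"
  obtains t where "homog (D - n) t" "D < n \<longrightarrow> t = 0"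
    and "\<forall>k\<in>Bidx n. xfree (f k) = xfree (beta3 n \<Phi> t k)"
proof -
  define g where "g j = xfree (f (Inl (yzmon (n - 1) j)))" for j
  define u where "u i = f (Inr (yzmon n i))" for i
  have "\<forall>i\<le>n. xfree (hilbert_burch n g i) = 0"
    using fb xfree_beta2_Inr[of _ f] by (simp add: g_def xfree_hilbert_burch xfree_idem)
  then have "\<forall>j<n. xfree (g j) = 0" by (rule xfree_hilbert_burch_eq_0)
  then have g0: "\<forall>j<n. xfree (f (Inl (yzmon (n - 1) j))) = 0" by (simp add: g_def xfree_idem)
  have "\<forall>j<n. xfree (Zp * u j - Yp * u (Suc j)) = 0"
    using fb xfree_beta2_Inl[of _ f] by (simp add: u_def xfree_diff xfree_Yp_mult xfree_Zp_mult)
  moreover have "\<forall>i\<le>n. homog D (u i)" using fh by (simp add: u_def)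
  ultimately obtain t where t: "homog (D - n) t" "xfree t = t" "D < n \<longrightarrow> t = 0"
    and tu: "\<forall>i\<le>n. xfree (u i) = mon (yzmon n i) * t"
    using xfree_transpose_hilbert_burch_kernel_homog by blast
  have "xfree (f k) = xfree (beta3 n \<Phi> t k)" if k: "k \<in> Bidx n" for k
    using k
  proof (cases rule: Bidx_cases)
    case (L j)
    then show ?thesis using k g0 by (simp add: beta3_def mult.assoc xfree_Xp_mult)
  next
    case (R i)
    then show ?thesis
      using k t(2) tu by (simp add: u_def beta3_def left_diff_distrib xfree_diff mult.assoc xfree_Xp_mult xfree_mon_mult)
  qed
  then show thesis using t by (intro that) auto
qed

lemma ker_beta2_homog:
  assumes "f \<in> Fmod n" "\<forall>k. homog D (f k)" "beta2 n \<Phi> f = (\<lambda>_. 0)"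
  shows "\<exists>r. f = beta3 n \<Phi> r"
  using assms
proof (induction D arbitrary: f rule: less_induct)
  case (less D)
  note fF = less.prems(1) and fh = less.prems(2) and fb = less.prems(3)
  obtain t where t: "homog (D - n) t" "D < n \<longrightarrow> t = 0"
    and tX: "\<forall>k\<in>Bidx n. xfree (f k) = xfree (beta3 n \<Phi> t k)"
    using ker_beta2_reduce[OF fh fb] by blast
  define f1 where "f1 k = f k - beta3 n \<Phi> t k" for k
  have "homog D (beta3 n \<Phi> t k)" for k
  proof (cases "D < n")
    case False
    have "homog (n + (D - n)) (b3 n \<Phi> k * t)" if "k \<in> Bidx n"
      by (rule homog_mult[OF _ t(1)]) (simp add: b3_b1 homog_b1 that)
    then show ?thesis using False by (simp add: beta3_def)
  qed (use t(2) in \<open>simp add: beta3_def\<close>)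
  then have f1h: "\<forall>k. homog D (f1 k)" using fh by (simp add: f1_def homog_diff)
  have f1b: "beta2 n \<Phi> f1 = (\<lambda>_. 0)" unfolding f1_def[abs_def] using fb by (simp add: beta2_diff beta2_beta3_zero)
  have f1F: "f1 \<in> Fmod n" unfolding f1_def[abs_def] by (rule Fmod_diff[OF fF beta3_Fmod])
  have "\<forall>k\<in>Bidx n. xfree (f1 k) = 0" using tX by (simp add: f1_def xfree_diff)
  then obtain f3 where f3: "f3 \<in> Fmod n" "\<forall>k. homog (D - 1) (f3 k)" "D = 0 \<longrightarrow> (\<forall>k. f3 k = 0)"
    and f13: "f1 = (\<lambda>k. Xp * f3 k)"
    using Fmod_Xp_divide[OF f1F f1h] by blast
  have f_eq: "f = (\<lambda>k. beta3 n \<Phi> t k + Xp * f3 k)"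
    using f13 by (auto simp: fun_eq_iff f1_def algebra_simps)
  show ?case
  proof (cases "D = 0")
    case True
    then show ?thesis using f_eq f3(3) by auto
  next
    case False
    have "Xp * beta2 n \<Phi> f3 i = 0" for i using f1b f13 by (metis beta2_scale)
    then have "beta2 n \<Phi> f3 = (\<lambda>_. 0)" using Xp_neq_0[where 'k='k] by auto
    then obtain r where "f3 = beta3 n \<Phi> r"
      using less.IH[of "D - 1" f3] False f3(1,2) by auto
    then have "f = beta3 n \<Phi> (t + Xp * r)"
      using f_eq by (auto simp: beta3_def algebra_simps)
    then show ?thesis by blast
  qed
qed

lemma Fmod_hcomp: "f \<in> Fmod n \<Longrightarrow> (\<lambda>k. hcomp D (f k)) \<in> Fmod n"
  by (simp add: Fmod_def)

lemma Fmod_eq_sum_hcomp: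
  assumes "f \<in> Fmod n"
  obtains N where "\<And>k. f k = (\<Sum>D\<le>N. hcomp D (f k))"
proof -
  define N where "N = (\<Sum>k\<in>Bidx n. Max (mdeg ` keys (f k)))"
  have "f k = (\<Sum>D\<le>N. hcomp D (f k))" for k
  proof (cases "k \<in> Bidx n")
    case True
    have "mdeg m \<le> N" if "m \<in> keys (f k)" for m
    proof -
      have "mdeg m \<le> Max (mdeg ` keys (f k))" using that by simp
      also have "\<dots> \<le> N" unfolding N_def by (rule member_le_sum) (simp_all add: True)
      finally show ?thesis .
    qed
    then show ?thesis by (rule hcomp_decomp)
  next
    case False
    then show ?thesis using assms by (simp add: Fmod_def)
  qed
  then show thesis by (rule that)
qed

lemma beta1_hcomp: "beta1 n \<Phi> (\<lambda>k. hcomp D (f k)) = hcomp (D + n) (beta1 n \<Phi> f)"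
  unfolding beta1_def hcomp_sum[OF finite_Bidx]
  by (intro sum.cong refl) (simp add: hcomp_homog_mult[OF homog_b1])

lemma beta2_hcomp: "beta2 n \<Phi> (\<lambda>k. hcomp D (f k)) i = hcomp (D + 1) (beta2 n \<Phi> f i)"
proof -
  have "hcomp (D + 1) (\<Sum>j\<in>Bidx n. b2 n \<Phi> i j * f j) = (\<Sum>j\<in>Bidx n. b2 n \<Phi> i j * hcomp D (f j))"
    unfolding hcomp_sum[OF finite_Bidx] by (intro sum.cong refl) (simp add: hcomp_homog_mult[OF homog_b2])
  then show ?thesis by (simp add: beta2_def)
qed

text \<open>All maps are graded, so exactness can be checked on homogeneous components.\<close>

lemma ker_beta1_in_image_beta2:
  assumes fF: "f \<in> Fmod n" and fb: "beta1 n \<Phi> f = 0"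
  shows "\<exists>w\<in>Fmod n. f = beta2 n \<Phi> w"
proof -
  have "\<exists>w\<in>Fmod n. (\<lambda>k. hcomp D (f k)) = beta2 n \<Phi> w" for D
    using fF fb by (intro ker_beta1_homog[where D = D]) (simp_all add: Fmod_hcomp homog_hcomp beta1_hcomp)
  then have "\<forall>D. \<exists>w. w \<in> Fmod n \<and> (\<lambda>k. hcomp D (f k)) = beta2 n \<Phi> w" by blast
  then obtain W where "\<forall>D. W D \<in> Fmod n \<and> (\<lambda>k. hcomp D (f k)) = beta2 n \<Phi> (W D)"
    by (rule choice[THEN exE])
  then have W: "\<And>D. W D \<in> Fmod n" "\<And>D k. hcomp D (f k) = beta2 n \<Phi> (W D) k"
    by (simp_all add: fun_eq_iff)
  obtain N where N: "\<And>k. f k = (\<Sum>D\<le>N. hcomp D (f k))" using Fmod_eq_sum_hcomp[OF fF] by blast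
  have "f k = beta2 n \<Phi> (\<lambda>k. \<Sum>D\<le>N. W D k) k" for k
    by (subst N) (simp add: beta2_sum W(2))
  then have "f = beta2 n \<Phi> (\<lambda>k. \<Sum>D\<le>N. W D k)" by blast
  moreover have "(\<lambda>k. \<Sum>D\<le>N. W D k) \<in> Fmod n" by (rule Fmod_sum) (simp_all add: W(1))
  ultimately show ?thesis by blast
qed

lemma ker_beta2_in_range_beta3:
  assumes fF: "f \<in> Fmod n" and fb: "beta2 n \<Phi> f = (\<lambda>_. 0)"
  shows "\<exists>r. f = beta3 n \<Phi> r"
proof -
  have "\<exists>r. (\<lambda>k. hcomp D (f k)) = beta3 n \<Phi> r" for D
    using fF fb by (intro ker_beta2_homog[where D = D]) (simp_all add: Fmod_hcomp homog_hcomp beta2_hcomp fun_eq_iff)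
  then have "\<forall>D. \<exists>r. (\<lambda>k. hcomp D (f k)) = beta3 n \<Phi> r" by blast
  then obtain R where "\<forall>D. (\<lambda>k. hcomp D (f k)) = beta3 n \<Phi> (R D)"
    by (rule choice[THEN exE])
  then have R: "\<And>D k. hcomp D (f k) = beta3 n \<Phi> (R D) k" by (simp add: fun_eq_iff)
  obtain N where N: "\<And>k. f k = (\<Sum>D\<le>N. hcomp D (f k))" using Fmod_eq_sum_hcomp[OF fF] by blast
  have "f k = beta3 n \<Phi> (\<Sum>D\<le>N. R D) k" for k
    by (subst N) (simp add: beta3_sum R)
  then have "f = beta3 n \<Phi> (\<Sum>D\<le>N. R D)" by blast
  then show ?thesis by blast
qed

lemma beta3_inj: "beta3 n \<Phi> r = (\<lambda>_. 0) \<Longrightarrow> r = 0"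
proof -
  assume a: "beta3 n \<Phi> r = (\<lambda>_. 0)"
  have m: "yzmon n 0 \<in> M0 n" by (simp add: yzmon_in_M0)
  have "b3 n \<Phi> (Inr (yzmon n 0)) * r = 0" using fun_cong[OF a, of "Inr (yzmon n 0)"] Inr_yzmon_Bidx[of 0]
    by (simp add: beta3_def)
  then have "b1 n \<Phi> (Inr (yzmon n 0)) = 0 \<or> r = 0" by (simp only: b3_b1 mult_eq_0_iff)
  then show "r = 0" using b1_Inr_neq_0[OF m] by blast
qed

lemma ker_beta2_eq_range_beta3: "{f \<in> Fmod n. beta2 n \<Phi> f = (\<lambda>_. 0)} = range (beta3 n \<Phi>)"
  using ker_beta2_in_range_beta3 beta3_Fmod beta2_beta3_zero by blast

lemma ker_beta1_eq_image_beta2: "{f \<in> Fmod n. beta1 n \<Phi> f = 0} = beta2 n \<Phi> ` Fmod n"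
  using ker_beta1_in_image_beta2 beta2_Fmod beta1_beta2_zero by blast

lemma homog_b3: "i \<in> Bidx n \<Longrightarrow> homog n (b3 n \<Phi> i)"
  by (simp add: b3_b1 homog_b1)

lemma card_Bidx: "card (Bidx n) = 2 * n + 1"
proof -
  have "card (Bidx n) = card (Inl ` M0 (n - 1) :: bidx set) + card (Inr ` M0 n :: bidx set)"
    unfolding Bidx_def by (rule card_Un_disjoint) auto
  also have "\<dots> = Suc (n - 1) + Suc n" by (simp add: card_image card_M0)
  also have "\<dots> = 2 * n + 1" using n_pos by simp
  finally show ?thesis .
qed

end

theorem theorem3p6:
  fixes n :: nat and \<Phi> :: "'k::field dp"
  assumes "n > 0"
    and "\<Phi> \<in> Dsp (2 * n - 1)"
    and "bij_betw (pmap \<Phi>) (Sym (n - 1)) (Dsp (n - 1))"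
  shows
    \<comment> \<open>exactness of 0 \<rightarrow> B_3 \<rightarrow> B_2 \<rightarrow> B_1 \<rightarrow> B_0 \<rightarrow> R/I \<rightarrow> 0\<close>
    "(\<forall>r. beta3 n \<Phi> r = (\<lambda>_. 0) \<longrightarrow> r = 0)
     \<and> {f \<in> Fmod n. beta2 n \<Phi> f = (\<lambda>_. 0)} = range (beta3 n \<Phi>)
     \<and> {f \<in> Fmod n. beta1 n \<Phi> f = 0} = beta2 n \<Phi> ` Fmod n
     \<and> beta1 n \<Phi> ` Fmod n = Iid \<Phi>
     \<comment> \<open>minimality: all matrix entries lie in the maximal ideal (x,y,z)\<close>
     \<and> (\<forall>j\<in>Bidx n. Poly_Mapping.lookup (b1 n \<Phi> j) 0 = 0)
     \<and> (\<forall>i\<in>Bidx n. \<forall>j\<in>Bidx n. Poly_Mapping.lookup (b2 n \<Phi> i j) 0 = 0)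
     \<and> (\<forall>i\<in>Bidx n. Poly_Mapping.lookup (b3 n \<Phi> i) 0 = 0)
     \<comment> \<open>graded form 0 \<rightarrow> R(-2n-1) \<rightarrow> R(-n-1)^{2n+1} \<rightarrow> R(-n)^{2n+1} \<rightarrow> R\<close>
     \<and> card (Bidx n) = 2 * n + 1
     \<and> (\<forall>j\<in>Bidx n. homog n (b1 n \<Phi> j))
     \<and> (\<forall>i\<in>Bidx n. \<forall>j\<in>Bidx n. homog 1 (b2 n \<Phi> i j))
     \<and> (\<forall>i\<in>Bidx n. homog n (b3 n \<Phi> i))"
proof -
  interpret inverse_system n \<Phi> using assms by unfold_locales
  have hb1: "\<forall>j\<in>Bidx n. homog n (b1 n \<Phi> j)" using homog_b1 by blast
  have hb2: "\<forall>i\<in>Bidx n. \<forall>j\<in>Bidx n. homog 1 (b2 n \<Phi> i j)" using homog_b2 by blast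
  have hb3: "\<forall>i\<in>Bidx n. homog n (b3 n \<Phi> i)" using homog_b3 by blast
  have "\<forall>j\<in>Bidx n. lookup (b1 n \<Phi> j) 0 = 0" "\<forall>i\<in>Bidx n. lookup (b3 n \<Phi> i) 0 = 0"
    using hb1 hb3 n_pos lookup_0_homog by blast+
  moreover have "\<forall>i\<in>Bidx n. \<forall>j\<in>Bidx n. lookup (b2 n \<Phi> i j) 0 = 0"
    by (simp add: lookup_0_homog[OF homog_b2])
  moreover have "\<forall>r. beta3 n \<Phi> r = (\<lambda>_. 0) \<longrightarrow> r = 0" using beta3_inj by blast
  ultimately show ?thesis
    using hb1 hb2 hb3 ker_beta2_eq_range_beta3 ker_beta1_eq_image_beta2 image_beta1_eq_Iid card_Bidx
    by (intro conjI) assumption+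
qed

end
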